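(* Let $k,m,n$ be positive integers with $k>m(n-1)$. Then the coefficient of $x_1^{k-n}x_2^{k-n+1}\cdots x_n^{k-1}$ (i.e. of $\prod_{i=1}^n x_i^{k-n+i-1}$) in $$(x_1+\cdots+x_n)^{(k-1)n-mn(n-1)}\prod_{1\leqslant i<j\leqslant n}(x_j-x_i)^{2m-1}$$ equals $$(-1)^{(m-1)\binom n2}\frac{m!(2m)!\cdots(nm)!}{(m!)^n n!}\cdot\frac{((k-1-m(n-1))n)!}{\prod_{r=0}^{n-1}(k-1-rm)!}.$$ In particular, the coefficient of $\prod_{i=1}^n x_i^{(m-1)(n-1)+i-1}$ in $\prod_{1\leqslant i<j\leqslant n}(x_j-x_i)^{2m-1}$ equals $(-1)^{(m-1)\binom n2}\dfrac{(mn)!}{(m!)^n n!}$. *)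

theory Defs
  imports Complex_Main "HOL-Library.Poly_Mapping"
begin

text \<open>Multivariate polynomials with integer coefficients in variables x_0, x_1, ...:
  a monomial is a finitely supported exponent vector, a polynomial a
  finitely supported map from monomials to coefficients, with convolution product.\<close>

type_synonym mpoly_int = "(nat \<Rightarrow>\<^sub>0 nat) \<Rightarrow>\<^sub>0 int"

definition var :: "nat \<Rightarrow> mpoly_int" where
  "var i = Poly_Mapping.single (Poly_Mapping.single i 1) 1"

definition coeff_of :: "mpoly_int \<Rightarrow> (nat \<Rightarrow>\<^sub>0 nat) \<Rightarrow> int" where
  "coeff_of p mon = Poly_Mapping.lookup p mon"

definition monomial_exps :: "nat \<Rightarrow> (nat \<Rightarrow> nat) \<Rightarrow> (nat \<Rightarrow>\<^sub>0 nat)" where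
  "monomial_exps n e = (\<Sum>i\<in>{1..n}. Poly_Mapping.single i (e i))"

end

(*
  The coefficient formula of the Combinatorial Nullstellensatz (Lason; Karasev and Petrov)
  expresses the coefficient of the top monomial x_1^(|A_1|-1) ... x_n^(|A_n|-1) of a polynomial
  p of that total degree as the weighted grid sum
  sum_{a in A_1 x ... x A_n} p(a) / prod_i prod_{b in A_i - {a_i}} (a_i - b).

  Write F_e = (x_1 + ... + x_n)^N * prod_{i<j} (x_j - x_i)^e with N = (k-1) n - m n (n-1).
  Expanding one extra Vandermonde factor by the Leibniz formula, the coefficient of
  (x_1 ... x_n)^(k-1) in F_(2m) is a signed sum of coefficients of F_(2m-1) at permuted
  staircases; the grid sum, reindexed along the permutation, shows that all of them equal +-C,
  where C is the coefficient we want.  Hence that coefficient of F_(2m) is n! (-1)^(n choose 2) C.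

  On the other hand, F_(2m) has the same top form as the product of the shifted factors
  (x_1 + ... + x_n - s) for N consecutive values of s and (x_j - x_i - t) for -m < t <= m.
  On the grid {0..k-1}^n these kill every point except a_i = k - 1 - (i - 1) m: two coordinates
  are at distance at least m, with the larger index at least m + 1 above or at least m below,
  and such a configuration reaches the required coordinate sum only as this staircase.  So the
  coefficient is a single term of the grid sum, a ratio of factorials.
*)
theory Submission
  imports Defs "Jordan_Normal_Form.Determinant" "HOL-Computational_Algebra.Polynomial" "HOL-Library.FuncSet"
begin

definition monom_eval :: "(nat \<Rightarrow> 'a::comm_semiring_1) \<Rightarrow> (nat \<Rightarrow>\<^sub>0 nat) \<Rightarrow> 'a" where
  "monom_eval a u = (\<Prod>i\<in>Poly_Mapping.keys u. a i ^ Poly_Mapping.lookup u i)"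

definition mpoly_eval :: "(nat \<Rightarrow> 'a::comm_ring_1) \<Rightarrow> mpoly_int \<Rightarrow> 'a" where
  "mpoly_eval a p = (\<Sum>u\<in>Poly_Mapping.keys p. of_int (Poly_Mapping.lookup p u) * monom_eval a u)"

lemma monom_eval_eq_prod:
  assumes "finite S" "Poly_Mapping.keys u \<subseteq> S"
  shows "monom_eval a u = (\<Prod>i\<in>S. a i ^ Poly_Mapping.lookup u i)"
  unfolding monom_eval_def
  by (rule prod.mono_neutral_left) (use assms in \<open>auto simp: in_keys_iff\<close>)

lemma monom_eval_add: "monom_eval a (u + v) = monom_eval a u * monom_eval a v"
proof -
  let ?S = "Poly_Mapping.keys u \<union> Poly_Mapping.keys v"
  have "monom_eval a (u + v) = (\<Prod>i\<in>?S. a i ^ Poly_Mapping.lookup (u + v) i)"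
    by (rule monom_eval_eq_prod) (auto dest: subsetD[OF keys_add])
  also have "\<dots> = (\<Prod>i\<in>?S. a i ^ Poly_Mapping.lookup u i * a i ^ Poly_Mapping.lookup v i)"
    by (simp add: lookup_add power_add)
  also have "\<dots> = monom_eval a u * monom_eval a v"
    by (simp add: prod.distrib monom_eval_eq_prod[of ?S])
  finally show ?thesis .
qed

lemma monom_eval_0 [simp]: "monom_eval a 0 = 1"
  by (simp add: monom_eval_def)

lemma monom_eval_single [simp]: "monom_eval a (Poly_Mapping.single i e) = a i ^ e"
  by (simp add: monom_eval_def)

lemma monom_eval_cong:
  "Poly_Mapping.keys u \<subseteq> I \<Longrightarrow> (\<And>i. i \<in> I \<Longrightarrow> a i = b i) \<Longrightarrow> monom_eval a u = monom_eval b u"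
  unfolding monom_eval_def by (rule prod.cong) auto

lemma mpoly_eval_single [simp]: "mpoly_eval a (Poly_Mapping.single u c) = of_int c * monom_eval a u"
  by (simp add: mpoly_eval_def)

lemma mpoly_eval_0 [simp]: "mpoly_eval a 0 = 0"
  by (simp add: mpoly_eval_def)

lemma mpoly_eval_add: "mpoly_eval a (p + q) = mpoly_eval a p + mpoly_eval a q"
  unfolding mpoly_eval_def by (rule setsum_keys_plus_distrib) (auto simp: algebra_simps)

lemma mpoly_eval_uminus: "mpoly_eval a (- p) = - mpoly_eval a p"
  unfolding mpoly_eval_def by (simp add: keys_minus sum_negf)

lemma mpoly_eval_diff: "mpoly_eval a (p - q) = mpoly_eval a p - mpoly_eval a q"
  using mpoly_eval_add[of a p "- q"] by (simp add: mpoly_eval_uminus)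

lemma mpoly_eval_mult: "mpoly_eval a (p * q) = mpoly_eval a p * mpoly_eval a q"
proof -
  have monom: "mpoly_eval a (p * frag_of v) = mpoly_eval a p * mpoly_eval a (frag_of v)" for v
    using subset_UNIV
  proof (induction p rule: frag_induction)
    case (one u)
    then show ?case by (simp add: mult_single monom_eval_add)
  qed (simp_all add: left_diff_distrib mpoly_eval_diff)
  show ?thesis
    using subset_UNIV
    by (induction q rule: frag_induction) (simp_all add: monom right_diff_distrib mpoly_eval_diff)
qed

lemma mpoly_eval_1 [simp]: "mpoly_eval a 1 = 1"
  using mpoly_eval_single[of a 0 1] by simp

lemma mpoly_eval_sum: "mpoly_eval a (\<Sum>x\<in>S. f x) = (\<Sum>x\<in>S. mpoly_eval a (f x))"
  by (induction S rule: infinite_finite_induct) (auto simp: mpoly_eval_add)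

lemma mpoly_eval_prod: "mpoly_eval a (\<Prod>x\<in>S. f x) = (\<Prod>x\<in>S. mpoly_eval a (f x))"
  by (induction S rule: infinite_finite_induct) (auto simp: mpoly_eval_mult)

lemma mpoly_eval_power: "mpoly_eval a (p ^ k) = mpoly_eval a p ^ k"
  by (induction k) (auto simp: mpoly_eval_mult)

lemma mpoly_eval_var [simp]: "mpoly_eval a (var i) = a i"
  by (simp add: var_def)

lemma of_int_mpoly_eq_single: "(of_int c :: mpoly_int) = Poly_Mapping.single 0 c"
  by (metis id_apply of_int_eq_id single_of_int)

lemma mpoly_eval_of_int [simp]: "mpoly_eval a (of_int c) = of_int c"
  by (simp add: of_int_mpoly_eq_single)

lemma prod_single_one:
  "(\<Prod>x\<in>S. Poly_Mapping.single (u x) (1::int)) = Poly_Mapping.single (\<Sum>x\<in>S. u x) 1"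
  by (induction S rule: infinite_finite_induct) (auto simp: mult_single)

lemma var_power: "var i ^ e = Poly_Mapping.single (Poly_Mapping.single i e) 1"
  by (induction e) (simp_all add: var_def mult_single single_add[symmetric] add.commute)

lemma lookup_mult_single:
  fixes g :: mpoly_int
  assumes le: "\<And>i. Poly_Mapping.lookup u i \<le> Poly_Mapping.lookup w i"
  shows "Poly_Mapping.lookup (g * Poly_Mapping.single u 1) w = Poly_Mapping.lookup g (w - u)"
proof -
  have w_minus_u: "w - u + u = w"
    by (intro poly_mapping_eqI) (use le in \<open>simp add: lookup_add lookup_minus\<close>)
  then have cancel: "v + u = w \<longleftrightarrow> v = w - u" for v
    by (metis add_diff_cancel_right')
  show ?thesis
    using subset_UNIV
  proof (induction g rule: frag_induction)
    case (one x)
    show ?case by (auto simp: mult_single lookup_single when_def cancel w_minus_u)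
  qed (simp_all add: left_diff_distrib lookup_minus)
qed

lemma lookup_of_int_mult: "Poly_Mapping.lookup (of_int c * g :: mpoly_int) w = c * Poly_Mapping.lookup g w"
  by (simp add: of_int_mpoly_eq_single mult_map_scale_conv_mult[symmetric] Poly_Mapping.map.rep_eq when_def)

definition vars_in :: "nat set \<Rightarrow> mpoly_int \<Rightarrow> bool" where
  "vars_in I p \<longleftrightarrow> (\<forall>u\<in>Poly_Mapping.keys p. Poly_Mapping.keys u \<subseteq> I)"

lemma mpoly_eval_cong:
  assumes "vars_in I p" "\<And>i. i \<in> I \<Longrightarrow> a i = b i"
  shows "mpoly_eval a p = mpoly_eval b p"
  unfolding mpoly_eval_def
proof (rule sum.cong[OF refl])
  fix u assume "u \<in> Poly_Mapping.keys p"
  then have "monom_eval a u = monom_eval b u"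
    using assms by (intro monom_eval_cong[of u I]) (auto simp: vars_in_def)
  then show "of_int (Poly_Mapping.lookup p u) * monom_eval a u = of_int (Poly_Mapping.lookup p u) * monom_eval b u"
    by simp
qed

lemma vars_in_add: "vars_in I p \<Longrightarrow> vars_in I q \<Longrightarrow> vars_in I (p + q)"
  unfolding vars_in_def using keys_add[of p q] by blast

lemma vars_in_uminus: "vars_in I p \<Longrightarrow> vars_in I (- p)"
  unfolding vars_in_def by simp

lemma vars_in_diff: "vars_in I p \<Longrightarrow> vars_in I q \<Longrightarrow> vars_in I (p - q)"
  by (metis diff_conv_add_uminus vars_in_add vars_in_uminus)

lemma vars_in_mult:
  assumes "vars_in I p" "vars_in I q"
  shows "vars_in I (p * q)"
  unfolding vars_in_def
proof
  fix w assume "w \<in> Poly_Mapping.keys (p * q)"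
  then obtain u v where "w = u + v" "u \<in> Poly_Mapping.keys p" "v \<in> Poly_Mapping.keys q"
    using keys_mult[of p q] by blast
  then show "Poly_Mapping.keys w \<subseteq> I"
    using assms keys_add[of u v] unfolding vars_in_def by blast
qed

lemma vars_in_1: "vars_in I 1"
  by (simp add: vars_in_def)

lemma vars_in_of_int: "vars_in I (of_int c)"
  by (simp add: vars_in_def of_int_mpoly_eq_single)

lemma vars_in_var: "i \<in> I \<Longrightarrow> vars_in I (var i)"
  by (simp add: vars_in_def var_def)

lemma vars_in_sum: "(\<And>x. x \<in> S \<Longrightarrow> vars_in I (f x)) \<Longrightarrow> vars_in I (\<Sum>x\<in>S. f x)"
proof (induction S rule: infinite_finite_induct)
  case (insert x F)
  then show ?case by (simp add: vars_in_add)
qed (simp_all add: vars_in_def)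

lemma vars_in_prod: "(\<And>x. x \<in> S \<Longrightarrow> vars_in I (f x)) \<Longrightarrow> vars_in I (\<Prod>x\<in>S. f x)"
  by (induction S rule: infinite_finite_induct) (auto intro: vars_in_mult vars_in_1)

lemma vars_in_power: "vars_in I p \<Longrightarrow> vars_in I (p ^ k)"
  by (induction k) (auto intro: vars_in_mult vars_in_1)

definition monom_degree :: "(nat \<Rightarrow>\<^sub>0 nat) \<Rightarrow> nat" where
  "monom_degree u = (\<Sum>i\<in>Poly_Mapping.keys u. Poly_Mapping.lookup u i)"

lemma monom_degree_eq_sum:
  assumes "finite S" "Poly_Mapping.keys u \<subseteq> S"
  shows "monom_degree u = (\<Sum>i\<in>S. Poly_Mapping.lookup u i)"
  unfolding monom_degree_def
  by (rule sum.mono_neutral_left) (use assms in \<open>auto simp: in_keys_iff\<close>)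

lemma monom_degree_add: "monom_degree (u + v) = monom_degree u + monom_degree v"
proof -
  let ?S = "Poly_Mapping.keys u \<union> Poly_Mapping.keys v"
  have "monom_degree (u + v) = (\<Sum>i\<in>?S. Poly_Mapping.lookup (u + v) i)"
    by (rule monom_degree_eq_sum) (use keys_add[of u v] in auto)
  also have "\<dots> = monom_degree u + monom_degree v"
    by (simp add: lookup_add sum.distrib monom_degree_eq_sum[of ?S])
  finally show ?thesis .
qed

definition total_degree_le :: "nat \<Rightarrow> mpoly_int \<Rightarrow> bool" where
  "total_degree_le D p \<longleftrightarrow> (\<forall>u\<in>Poly_Mapping.keys p. monom_degree u \<le> D)"

definition total_degree_less :: "nat \<Rightarrow> mpoly_int \<Rightarrow> bool" where
  "total_degree_less D p \<longleftrightarrow> (\<forall>u\<in>Poly_Mapping.keys p. monom_degree u < D)"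

definition same_top_form :: "nat \<Rightarrow> mpoly_int \<Rightarrow> mpoly_int \<Rightarrow> bool" where
  "same_top_form D p q \<longleftrightarrow> total_degree_le D p \<and> total_degree_le D q \<and> total_degree_less D (p - q)"

lemma total_degree_le_add: "total_degree_le D p \<Longrightarrow> total_degree_le D q \<Longrightarrow> total_degree_le D (p + q)"
  unfolding total_degree_le_def using keys_add[of p q] by blast

lemma total_degree_less_add:
  "total_degree_less D p \<Longrightarrow> total_degree_less D q \<Longrightarrow> total_degree_less D (p + q)"
  unfolding total_degree_less_def using keys_add[of p q] by blast

lemma total_degree_le_diff: "total_degree_le D p \<Longrightarrow> total_degree_le D q \<Longrightarrow> total_degree_le D (p - q)"
  by (metis diff_conv_add_uminus keys_minus total_degree_le_add total_degree_le_def)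

lemma total_degree_le_mult:
  assumes "total_degree_le a p" "total_degree_le b q"
  shows "total_degree_le (a + b) (p * q)"
  unfolding total_degree_le_def
proof
  fix w assume "w \<in> Poly_Mapping.keys (p * q)"
  then obtain u v where "w = u + v" "u \<in> Poly_Mapping.keys p" "v \<in> Poly_Mapping.keys q"
    using keys_mult[of p q] by blast
  then show "monom_degree w \<le> a + b"
    using assms by (simp add: total_degree_le_def monom_degree_add add_mono)
qed

lemma total_degree_less_mult:
  assumes "total_degree_less a p" "total_degree_le b q"
  shows "total_degree_less (a + b) (p * q)"
  unfolding total_degree_less_def
proof
  fix w assume "w \<in> Poly_Mapping.keys (p * q)"
  then obtain u v where "w = u + v" "u \<in> Poly_Mapping.keys p" "v \<in> Poly_Mapping.keys q"
    using keys_mult[of p q] by blast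
  then show "monom_degree w < a + b"
    using assms by (simp add: total_degree_le_def total_degree_less_def monom_degree_add add_less_le_mono)
qed

lemma total_degree_le_var: "total_degree_le 1 (var i)"
  by (simp add: total_degree_le_def var_def monom_degree_def)

lemma total_degree_le_sum:
  "(\<And>x. x \<in> S \<Longrightarrow> total_degree_le D (f x)) \<Longrightarrow> total_degree_le D (\<Sum>x\<in>S. f x)"
proof (induction S rule: infinite_finite_induct)
  case (insert x F)
  then show ?case by (simp add: total_degree_le_add)
qed (simp_all add: total_degree_le_def)

lemma same_top_form_mult:
  assumes "same_top_form a p p'" "same_top_form b q q'"
  shows "same_top_form (a + b) (p * q) (p' * q')"
proof -
  have "p * q - p' * q' = (p - p') * q + (q - q') * p'"
    by (simp add: algebra_simps)
  moreover have "total_degree_less (a + b) ((p - p') * q)"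
    using assms by (intro total_degree_less_mult) (auto simp: same_top_form_def)
  moreover have "total_degree_less (b + a) ((q - q') * p')"
    using assms by (intro total_degree_less_mult) (auto simp: same_top_form_def)
  ultimately have "total_degree_less (a + b) (p * q - p' * q')"
    by (simp add: total_degree_less_add add.commute)
  then show ?thesis
    using assms by (auto simp: same_top_form_def intro: total_degree_le_mult)
qed

lemma same_top_form_prod:
  "(\<And>x. x \<in> S \<Longrightarrow> same_top_form (d x) (f x) (g x))
    \<Longrightarrow> same_top_form (\<Sum>x\<in>S. d x) (\<Prod>x\<in>S. f x) (\<Prod>x\<in>S. g x)"
proof (induction S rule: infinite_finite_induct)
  case (insert x F)
  then show ?case by (simp add: same_top_form_mult)
qed (simp_all add: same_top_form_def total_degree_le_def total_degree_less_def monom_degree_def)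

lemma same_top_form_power: "same_top_form a p q \<Longrightarrow> same_top_form (k * a) (p ^ k) (q ^ k)"
  using same_top_form_prod[of "{..<k}" "\<lambda>_. a" "\<lambda>_. p" "\<lambda>_. q"] by simp

lemma same_top_form_refl: "total_degree_le D p \<Longrightarrow> same_top_form D p p"
  by (simp add: same_top_form_def total_degree_less_def)

lemma total_degree_le_prod:
  assumes "\<And>x. x \<in> S \<Longrightarrow> total_degree_le (d x) (f x)"
  shows "total_degree_le (\<Sum>x\<in>S. d x) (\<Prod>x\<in>S. f x)"
proof -
  have "same_top_form (\<Sum>x\<in>S. d x) (\<Prod>x\<in>S. f x) (\<Prod>x\<in>S. f x)"
    by (rule same_top_form_prod) (simp add: assms same_top_form_refl)
  then show ?thesis by (simp add: same_top_form_def)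
qed

lemma total_degree_le_power:
  assumes "total_degree_le a p"
  shows "total_degree_le (k * a) (p ^ k)"
proof -
  have "same_top_form (k * a) (p ^ k) (p ^ k)"
    by (rule same_top_form_power) (simp add: assms same_top_form_refl)
  then show ?thesis by (simp add: same_top_form_def)
qed

lemma same_top_form_diff_const:
  assumes "total_degree_le 1 p"
  shows "same_top_form 1 (p - of_int c) p"
proof -
  have "total_degree_less 1 (of_int c)"
    by (simp add: total_degree_less_def of_int_mpoly_eq_single monom_degree_def)
  then show ?thesis
    using assms total_degree_le_diff[of 1 p "of_int c"]
    by (simp add: same_top_form_def total_degree_less_def total_degree_le_def)
qed

lemma same_top_form_coeff:
  assumes "same_top_form D p q" "monom_degree u = D"
  shows "Poly_Mapping.lookup p u = Poly_Mapping.lookup q u"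
proof -
  have "u \<notin> Poly_Mapping.keys (p - q)"
    using assms by (auto simp: same_top_form_def total_degree_less_def)
  then show ?thesis by (simp add: in_keys_iff lookup_minus)
qed

section \<open>The coefficient formula of the Combinatorial Nullstellensatz\<close>

definition lagrange_denom :: "'a set \<Rightarrow> 'a \<Rightarrow> 'a::comm_ring_1" where
  "lagrange_denom A x = (\<Prod>b\<in>A - {x}. x - b)"

lemma lagrange_denom_nonzero: "finite A \<Longrightarrow> lagrange_denom A (x::'a::idom) \<noteq> 0"
  unfolding lagrange_denom_def by (auto simp: prod_zero_iff)

text \<open>The sum is the leading coefficient of the interpolation polynomial of \<open>x\<^sup>e\<close> on \<open>A\<close>.\<close>

lemma sum_power_div_lagrange_denom:
  fixes A :: "'a::field set"
  assumes fin: "finite A" and card: "card A = Suc s" and e: "e \<le> s"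
  shows "(\<Sum>a\<in>A. a ^ e / lagrange_denom A a) = (if e = s then 1 else 0)"
proof -
  define L where "L a = (\<Prod>b\<in>A - {a}. [:- b, 1:])" for a
  define q where "q = (\<Sum>a\<in>A. smult (a ^ e / lagrange_denom A a) (L a))"
  have degree_L: "degree (L a) = s" if "a \<in> A" for a
    using card that fin by (simp add: L_def degree_prod_sum_eq)
  have coeff_L: "coeff (L a) s = 1" if "a \<in> A" for a
    using degree_L[OF that] lead_coeff_prod[of "\<lambda>b. [:- b, 1:]" "A - {a}"] by (simp add: L_def)
  have poly_L: "poly (L a) c = (if c = a then lagrange_denom A a else 0)" if "a \<in> A" "c \<in> A" for a c
    using that fin by (auto simp: L_def lagrange_denom_def poly_prod prod_zero_iff)
  have "degree q \<le> s"
    unfolding q_def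
    by (rule degree_sum_le) (use fin in \<open>auto intro: order.trans[OF degree_smult_le] simp: degree_L\<close>)
  moreover have "poly q c = poly (monom 1 e) c" if c: "c \<in> A" for c
  proof -
    have "poly q c = (\<Sum>a\<in>A. if a = c then c ^ e else 0)"
      unfolding q_def poly_sum
      by (rule sum.cong) (use c fin poly_L lagrange_denom_nonzero in auto)
    then show ?thesis
      using c fin by (simp add: poly_monom)
  qed
  ultimately have "q = monom 1 e"
    using card e by (intro poly_eqI_degree[of A]) (auto simp: degree_monom_eq)
  moreover have "coeff q s = (\<Sum>a\<in>A. a ^ e / lagrange_denom A a)"
    unfolding q_def by (simp add: coeff_sum coeff_L)
  ultimately show ?thesis by (simp add: coeff_monom)
qed

lemma grid_sum_monom_eval:
  fixes A :: "nat \<Rightarrow> 'a::field set"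
  assumes fin: "finite I" and finA: "\<And>i. i \<in> I \<Longrightarrow> finite (A i)" and neA: "\<And>i. i \<in> I \<Longrightarrow> A i \<noteq> {}"
    and keys_u: "Poly_Mapping.keys u \<subseteq> I" and deg_u: "monom_degree u \<le> (\<Sum>i\<in>I. card (A i) - 1)"
    and E: "\<And>i. i \<in> I \<Longrightarrow> Poly_Mapping.lookup E i = card (A i) - 1" "Poly_Mapping.keys E \<subseteq> I"
  shows "(\<Sum>a\<in>PiE I A. monom_eval a u / (\<Prod>i\<in>I. lagrange_denom (A i) (a i))) = (if u = E then 1 else 0)"
proof -
  let ?H = "\<lambda>i e. \<Sum>x\<in>A i. x ^ e / lagrange_denom (A i) x"
  have H: "?H i e = (if e = card (A i) - 1 then 1 else 0)" if "i \<in> I" "e \<le> card (A i) - 1" for i e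
    using finA[OF that(1)] neA[OF that(1)] that(2)
    by (intro sum_power_div_lagrange_denom) (auto simp: card_gt_0_iff)
  have "(\<Sum>a\<in>PiE I A. monom_eval a u / (\<Prod>i\<in>I. lagrange_denom (A i) (a i)))
      = (\<Sum>a\<in>PiE I A. \<Prod>i\<in>I. a i ^ Poly_Mapping.lookup u i / lagrange_denom (A i) (a i))"
    by (simp add: monom_eval_eq_prod[OF fin keys_u] prod_dividef)
  also have "\<dots> = (\<Prod>i\<in>I. ?H i (Poly_Mapping.lookup u i))"
    by (rule prod_sum_PiE[symmetric]) (use fin finA in auto)
  also have "\<dots> = (if u = E then 1 else 0)"
  proof (cases "\<exists>i\<in>I. Poly_Mapping.lookup u i < card (A i) - 1")
    case True
    then obtain j where j: "j \<in> I" "Poly_Mapping.lookup u j < card (A j) - 1" by blast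
    then have "u \<noteq> E" using E by auto
    moreover have "?H j (Poly_Mapping.lookup u j) = 0" using H[of j] j by simp
    then have "(\<Prod>i\<in>I. ?H i (Poly_Mapping.lookup u i)) = 0"
      using fin j(1) by (intro prod_zero) auto
    ultimately show ?thesis by simp
  next
    case False
    then have ge: "card (A i) - 1 \<le> Poly_Mapping.lookup u i" if "i \<in> I" for i
      using that by (meson not_le)
    have "(\<Sum>i\<in>I. Poly_Mapping.lookup u i) \<le> (\<Sum>i\<in>I. card (A i) - 1)"
      using deg_u monom_degree_eq_sum[OF fin keys_u] by simp
    then have "(\<Sum>i\<in>I. card (A i) - 1) = (\<Sum>i\<in>I. Poly_Mapping.lookup u i)"
      using sum_mono[of I "\<lambda>i. card (A i) - 1"] ge by (simp add: le_antisym)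
    then have "Poly_Mapping.lookup u i = card (A i) - 1" if "i \<in> I" for i
      using sum_mono_inv[of "\<lambda>i. card (A i) - 1"] ge fin that by (metis (no_types, lifting))
    then have "u = E"
      by (intro poly_mapping_eqI) (metis E in_keys_iff keys_u subsetD)
    then show ?thesis using H E by simp
  qed
  finally show ?thesis .
qed

theorem coeff_eq_grid_sum:
  fixes p :: mpoly_int and A :: "nat \<Rightarrow> 'a::field set"
  assumes fin: "finite I" and finA: "\<And>i. i \<in> I \<Longrightarrow> finite (A i)" and neA: "\<And>i. i \<in> I \<Longrightarrow> A i \<noteq> {}"
    and vars: "vars_in I p" and deg: "total_degree_le (\<Sum>i\<in>I. card (A i) - 1) p"
    and E: "\<And>i. i \<in> I \<Longrightarrow> Poly_Mapping.lookup E i = card (A i) - 1" "Poly_Mapping.keys E \<subseteq> I"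
  shows "of_int (Poly_Mapping.lookup p E)
    = (\<Sum>a\<in>PiE I A. mpoly_eval a p / (\<Prod>i\<in>I. lagrange_denom (A i) (a i)))"
proof -
  let ?c = "\<lambda>u. of_int (Poly_Mapping.lookup p u) :: 'a"
  let ?w = "\<lambda>a. \<Prod>i\<in>I. lagrange_denom (A i) (a i)"
  have "(\<Sum>a\<in>PiE I A. mpoly_eval a p / ?w a)
      = (\<Sum>u\<in>Poly_Mapping.keys p. ?c u * (\<Sum>a\<in>PiE I A. monom_eval a u / ?w a))"
    by (simp add: mpoly_eval_def sum_divide_distrib sum_distrib_left sum.swap[of _ "PiE I A"])
  also have "\<dots> = (\<Sum>u\<in>Poly_Mapping.keys p. if u = E then ?c u else 0)"
  proof (rule sum.cong[OF refl])
    fix u assume u: "u \<in> Poly_Mapping.keys p"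
    have "(\<Sum>a\<in>PiE I A. monom_eval a u / ?w a) = (if u = E then 1 else 0)"
      using u vars deg by (intro grid_sum_monom_eval[OF fin finA neA _ _ E])
        (auto simp: vars_in_def total_degree_le_def)
    then show "?c u * (\<Sum>a\<in>PiE I A. monom_eval a u / ?w a) = (if u = E then ?c u else 0)"
      by simp
  qed
  also have "\<dots> = ?c E"
    by (simp add: in_keys_iff)
  finally show ?thesis ..
qed

lemma sum_PiE_reindex:
  assumes tau: "bij_betw \<tau> I I"
  shows "(\<Sum>a\<in>PiE I (\<lambda>i. A (\<tau> i)). F a) = (\<Sum>b\<in>PiE I A. F (restrict (\<lambda>i. b (\<tau> i)) I))"
proof -
  let ?h = "\<lambda>b. restrict (\<lambda>i. b (\<tau> i)) I"
  let ?h' = "\<lambda>a. restrict (\<lambda>j. a (inv_into I \<tau> j)) I"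
  have tI: "\<tau> i \<in> I" if "i \<in> I" for i using tau that by (auto simp: bij_betw_def)
  have iI: "inv_into I \<tau> j \<in> I" if "j \<in> I" for j using tau that by (auto simp: bij_betw_def inv_into_into)
  have ti: "\<tau> (inv_into I \<tau> j) = j" if "j \<in> I" for j using tau that by (auto simp: bij_betw_def f_inv_into_f)
  have it: "inv_into I \<tau> (\<tau> i) = i" if "i \<in> I" for i using tau that by (auto simp: bij_betw_def inv_into_f_f)
  have "bij_betw ?h (PiE I A) (PiE I (\<lambda>i. A (\<tau> i)))"
  proof (rule bij_betw_byWitness[where f'="?h'"])
    show "?h' ` PiE I (\<lambda>i. A (\<tau> i)) \<subseteq> PiE I A"
    proof
      fix x assume "x \<in> ?h' ` PiE I (\<lambda>i. A (\<tau> i))"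
      then obtain a where a: "a \<in> PiE I (\<lambda>i. A (\<tau> i))" "x = ?h' a" by blast
      have "a (inv_into I \<tau> j) \<in> A j" if "j \<in> I" for j
        using a(1) iI[OF that] ti[OF that] by (metis PiE_E)
      then show "x \<in> PiE I A" using a(2) by auto
    qed
  qed (auto simp: restrict_def fun_eq_iff PiE_def extensional_def tI iI ti it)
  then show ?thesis by (rule sum.reindex_bij_betw[symmetric])
qed

section \<open>The Vandermonde product\<close>

lemma det_scale_rows:
  fixes c :: "nat \<Rightarrow> 'a::comm_ring_1"
  shows "det (mat n n (\<lambda>(i, j). c i * Y i j)) = (\<Prod>i<n. c i) * det (mat n n (\<lambda>(i, j). Y i j))"
proof -
  let ?D = "mat n n (\<lambda>(i, j). if i = j then c i else 0)"
  let ?Y = "mat n n (\<lambda>(i, j). Y i j)"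
  have "mat n n (\<lambda>(i, j). c i * Y i j) = ?D * ?Y"
    by (rule eq_matI) (auto simp: scalar_prod_def if_distrib[of "\<lambda>x. x * _"] cong: if_cong)
  moreover have "det ?D = (\<Prod>i<n. c i)"
    by (subst det_upper_triangular)
      (auto simp: upper_triangular_def diag_mat_def prod.distinct_set_conv_list[symmetric] atLeast0LessThan)
  ultimately show ?thesis by (simp add: det_mult[of _ n])
qed

lemma det_vandermonde_Suc:
  fixes x :: "nat \<Rightarrow> 'a::comm_ring_1"
  shows "det (mat (Suc n) (Suc n) (\<lambda>(i, j). x i ^ j))
    = (\<Prod>i<n. x (Suc i) - x 0) * det (mat n n (\<lambda>(i, j). x (Suc i) ^ j))"
proof -
  let ?N = "Suc n"
  let ?W = "mat ?N ?N (\<lambda>(i, j). x i ^ j)"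
  let ?U = "mat ?N ?N (\<lambda>(l, j). (if l = j then 1 else 0) + (if Suc l = j then - x 0 else 0))"
  let ?B = "mat ?N ?N (\<lambda>(i, j). if j = 0 then 1 else (x i - x 0) * x i ^ (j - 1))"
  txt \<open>Subtracting \<open>x\<^sub>0\<close> times each column from the next one clears the first row.\<close>
  have "det ?U = 1"
    by (subst det_upper_triangular)
      (auto simp: upper_triangular_def diag_mat_def prod.distinct_set_conv_list[symmetric] atLeast0LessThan)
  moreover have "?W * ?U = ?B"
  proof (rule eq_matI)
    fix i j assume "i < dim_row ?B" "j < dim_col ?B"
    then have i: "i < ?N" and j: "j < ?N" by auto
    have "(?W * ?U) $$ (i, j)
        = (\<Sum>l<?N. if l = j then x i ^ l else 0) + (\<Sum>l<?N. if Suc l = j then - x 0 * x i ^ l else 0)"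
      using i j
      by (simp add: scalar_prod_def atLeast0LessThan distrib_left sum.distrib mult.commute
          if_distrib[of "\<lambda>t. x i ^ _ * t"] cong: if_cong)
    also have "\<dots> = ?B $$ (i, j)"
    proof (cases j)
      case (Suc j')
      then show ?thesis using i j by (simp add: algebra_simps del: sum.lessThan_Suc)
    qed (use i j in \<open>simp del: sum.lessThan_Suc\<close>)
    finally show "(?W * ?U) $$ (i, j) = ?B $$ (i, j)" .
  qed auto
  moreover have delete: "mat_delete ?B 0 0 = mat n n (\<lambda>(i, j). (x (Suc i) - x 0) * x (Suc i) ^ j)"
    by (rule eq_matI) (auto simp: mat_delete_def algebra_simps)
  ultimately have "det ?W = det ?B"
    using det_mult[of ?W ?N ?U] by simp
  also have "\<dots> = (\<Sum>j<?N. ?B $$ (0, j) * cofactor ?B 0 j)"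
    by (rule laplace_expansion_row[of _ ?N]) auto
  also have "\<dots> = cofactor ?B 0 0"
    by (subst sum.lessThan_Suc_shift) simp
  also have "\<dots> = det (mat n n (\<lambda>(i, j). (x (Suc i) - x 0) * x (Suc i) ^ j))"
    by (simp add: cofactor_def delete)
  also have "\<dots> = (\<Prod>i<n. x (Suc i) - x 0) * det (mat n n (\<lambda>(i, j). x (Suc i) ^ j))"
    by (rule det_scale_rows)
  finally show ?thesis .
qed

lemma det_vandermonde:
  fixes x :: "nat \<Rightarrow> 'a::comm_ring_1"
  shows "det (mat n n (\<lambda>(i, j). x i ^ j)) = (\<Prod>j<n. \<Prod>i<j. x j - x i)"
proof (induction n arbitrary: x)
  case (Suc n)
  then show ?case
    by (simp add: det_vandermonde_Suc prod.lessThan_Suc_shift prod.distrib del: prod.lessThan_Suc)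
qed simp

lemma vandermonde_eq_sum_permutations:
  fixes x :: "nat \<Rightarrow> 'a::comm_ring_1"
  shows "(\<Prod>j<n. \<Prod>i<j. x j - x i) = (\<Sum>p | p permutes {0..<n}. signof p * (\<Prod>i<n. x i ^ p i))"
proof -
  have "det (mat n n (\<lambda>(i, j). x i ^ j))
      = (\<Sum>p | p permutes {0..<n}. signof p * (\<Prod>i = 0..<n. mat n n (\<lambda>(i, j). x i ^ j) $$ (i, p i)))"
    by (rule det_def') simp
  also have "\<dots> = (\<Sum>p | p permutes {0..<n}. signof p * (\<Prod>i<n. x i ^ p i))"
    by (intro sum.cong refl arg_cong[where f="\<lambda>t. _ * t"] prod.cong)
      (auto simp: atLeast0LessThan permutes_in_image)
  finally show ?thesis by (simp add: det_vandermonde)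
qed

lemma vandermonde_permute:
  fixes z :: "nat \<Rightarrow> 'a::comm_ring_1"
  assumes p: "p permutes {0..<n}"
  shows "(\<Prod>j<n. \<Prod>i<j. z (p j) - z (p i)) = signof p * (\<Prod>j<n. \<Prod>i<j. z j - z i)"
proof -
  let ?V = "mat n n (\<lambda>(i, j). z i ^ j)"
  have "mat n n (\<lambda>(i, j). z (p i) ^ j) = mat n n (\<lambda>(i, j). ?V $$ (p i, j))"
    using p by (intro eq_matI) (auto simp: permutes_in_image)
  then have "det (mat n n (\<lambda>(i, j). z (p i) ^ j)) = signof p * det ?V"
    using det_permute_rows[of ?V n p] p by simp
  then show ?thesis by (simp add: det_vandermonde)
qed

definition index_pairs :: "nat \<Rightarrow> (nat \<times> nat) set" where
  "index_pairs n = {(i, j). 1 \<le> i \<and> i < j \<and> j \<le> n}"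

lemma finite_index_pairs [simp]: "finite (index_pairs n)"
  by (rule finite_subset[of _ "{1..n} \<times> {1..n}"]) (auto simp: index_pairs_def)

lemma bij_betw_Sigma_index_pairs:
  "bij_betw (\<lambda>(j, i). (Suc i, Suc j)) (SIGMA j:{..<n}. {..<j}) (index_pairs n)"
  by (rule bij_betw_byWitness[where f'="\<lambda>(i, j). (j - 1, i - 1)"]) (auto simp: index_pairs_def image_iff)

lemma prod_index_pairs_nested:
  "(\<Prod>(i, j)\<in>index_pairs n. g i j) = (\<Prod>j<n. \<Prod>i<j. g (Suc i) (Suc j))"
proof -
  have "(\<Prod>j<n. \<Prod>i<j. g (Suc i) (Suc j)) = (\<Prod>(j, i)\<in>(SIGMA j:{..<n}. {..<j}). g (Suc i) (Suc j))"
    by (rule prod.Sigma) auto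
  also have "\<dots> = (\<Prod>x\<in>(SIGMA j:{..<n}. {..<j}). (\<lambda>(i, j). g i j) ((\<lambda>(j, i). (Suc i, Suc j)) x))"
    by (rule prod.cong) auto
  also have "\<dots> = (\<Prod>(i, j)\<in>index_pairs n. g i j)"
    by (rule prod.reindex_bij_betw[OF bij_betw_Sigma_index_pairs])
  finally show ?thesis by simp
qed

lemma prod_index_pairs_reflect:
  "(\<Prod>(i, j)\<in>index_pairs n. g i j) = (\<Prod>(i, j)\<in>index_pairs n. g (Suc n - j) (Suc n - i))"
proof -
  have "bij_betw (\<lambda>(i, j). (Suc n - j, Suc n - i)) (index_pairs n) (index_pairs n)"
    by (rule bij_betw_byWitness[where f'="\<lambda>(i, j). (Suc n - j, Suc n - i)"])
      (auto simp: index_pairs_def image_iff)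
  from prod.reindex_bij_betw[OF this, of "\<lambda>(i, j). g i j"] show ?thesis
    by (simp add: case_prod_beta)
qed

lemma sum_lessThan_eq_choose_2: "(\<Sum>j<n. j) = n choose 2"
  by (induction n) (simp_all add: numeral_2_eq_2)

lemma two_times_choose_two: "2 * (n choose 2) = n * (n - 1)"
proof -
  have "2 * (\<Sum>j<n. j) = n * (n - 1)"
  proof (induction n)
    case (Suc n)
    then show ?case by (cases n) (auto simp: algebra_simps)
  qed simp
  then show ?thesis by (simp add: sum_lessThan_eq_choose_2)
qed

lemma card_index_pairs: "card (index_pairs n) = n choose 2"
  using bij_betw_same_card[OF bij_betw_Sigma_index_pairs, of n]
  by (simp add: card_SigmaI sum_lessThan_eq_choose_2)

text \<open>Relabelling the variables by \<open>i \<mapsto> n - p (i - 1)\<close> composes the permutation \<open>p\<close> with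
  the order reversal of \<open>{1..n}\<close>, whose sign is \<open>(-1)^(n choose 2)\<close>.\<close>

lemma prod_index_pairs_diff_relabel:
  fixes y :: "nat \<Rightarrow> 'a::comm_ring_1"
  assumes p: "p permutes {0..<n}"
  shows "(\<Prod>(i, j)\<in>index_pairs n. y (n - p (j - 1)) - y (n - p (i - 1)))
       = signof p * (-1) ^ (n choose 2) * (\<Prod>(i, j)\<in>index_pairs n. y j - y i)"
proof -
  define z where "z l = y (n - l)" for l
  have "(\<Prod>(i, j)\<in>index_pairs n. y (n - p (j - 1)) - y (n - p (i - 1)))
      = (\<Prod>j<n. \<Prod>i<j. z (p j) - z (p i))"
    by (simp add: prod_index_pairs_nested z_def)
  also have "\<dots> = signof p * (\<Prod>j<n. \<Prod>i<j. z j - z i)"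
    by (rule vandermonde_permute[OF p])
  also have "(\<Prod>j<n. \<Prod>i<j. z j - z i) = (\<Prod>(i, j)\<in>index_pairs n. y (Suc n - j) - y (Suc n - i))"
    by (simp add: prod_index_pairs_nested z_def)
  also have "\<dots> = (\<Prod>(i, j)\<in>index_pairs n. - (y j - y i))"
    by (subst prod_index_pairs_reflect) (rule prod.cong, auto simp: index_pairs_def)
  also have "\<dots> = (\<Prod>x\<in>index_pairs n. -1) * (\<Prod>(i, j)\<in>index_pairs n. y j - y i)"
    unfolding case_prod_beta prod.distrib[symmetric] by simp
  also have "\<dots> = (-1) ^ (n choose 2) * (\<Prod>(i, j)\<in>index_pairs n. y j - y i)"
    by (simp add: card_index_pairs)
  finally show ?thesis by simp
qed

lemma bij_betw_reverse_permute:
  fixes n :: nat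
  assumes p: "p permutes {0..<n}"
  shows "bij_betw (\<lambda>i. n - p (i - 1)) {1..n} {1..n}"
proof (rule bij_betw_byWitness[where f'="\<lambda>j. Suc (inv_into UNIV p (n - j))"])
  have p_less: "p x < n" if "x < n" for x using p that by (simp add: permutes_in_image)
  have inv_less: "inv_into UNIV p x < n" if "x < n" for x
    using permutes_inv[OF p] that by (simp add: permutes_in_image)
  show "\<forall>i\<in>{1..n}. Suc (inv_into UNIV p (n - (n - p (i - 1)))) = i"
  proof
    fix i assume i: "i \<in> {1..n}"
    then have "i - 1 < n" by auto
    then have "p (i - 1) < n" by (rule p_less)
    then have "n - (n - p (i - 1)) = p (i - 1)" by simp
    then show "Suc (inv_into UNIV p (n - (n - p (i - 1)))) = i"
      using i permutes_inverses(2)[OF p] by simp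
  qed
  show "\<forall>j\<in>{1..n}. n - p (Suc (inv_into UNIV p (n - j)) - 1) = j"
    using permutes_inverses(1)[OF p] by auto
  show "(\<lambda>i. n - p (i - 1)) ` {1..n} \<subseteq> {1..n}"
  proof (rule image_subsetI)
    fix i assume "i \<in> {1..n}"
    then have "i - 1 < n" by auto
    then have "p (i - 1) < n" by (rule p_less)
    then show "n - p (i - 1) \<in> {1..n}" by auto
  qed
  show "(\<lambda>j. Suc (inv_into UNIV p (n - j))) ` {1..n} \<subseteq> {1..n}"
  proof (rule image_subsetI)
    fix j assume "j \<in> {1..n}"
    then have "n - j < n" by auto
    then have "inv_into UNIV p (n - j) < n" by (rule inv_less)
    then show "Suc (inv_into UNIV p (n - j)) \<in> {1..n}" by auto
  qed
qed

lemma prod_index_pairs_diff_power_relabel: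
  fixes y :: "nat \<Rightarrow> 'a::comm_ring_1"
  assumes p: "p permutes {0..<n}" and e: "odd e"
  shows "(\<Prod>(i, j)\<in>index_pairs n. (y (n - p (j - 1)) - y (n - p (i - 1))) ^ e)
       = signof p * (-1) ^ (n choose 2) * (\<Prod>(i, j)\<in>index_pairs n. (y j - y i) ^ e)"
proof -
  have sign_sq: "(signof p * (-1) ^ (n choose 2) :: 'a) ^ 2 = 1"
    by (simp add: power_mult_distrib sign_def flip: power_mult)
  have "(signof p * (-1) ^ (n choose 2) :: 'a) ^ e = signof p * (-1) ^ (n choose 2)"
    using e sign_sq by (auto elim!: oddE simp: power_mult power_add)
  then show ?thesis
    using prod_index_pairs_diff_relabel[OF p, of y]
    by (simp add: prod_power_distrib[symmetric] case_prod_beta power_mult_distrib)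
qed

section \<open>Sums of separated integers\<close>

lemma separated_le_max:
  fixes z :: "'a \<Rightarrow> int"
  assumes sep: "\<And>i j. i \<in> J \<Longrightarrow> j \<in> J \<Longrightarrow> i \<noteq> j \<Longrightarrow> m \<le> \<bar>z i - z j\<bar>"
    and max: "i\<^sub>0 \<in> J" "\<And>j. j \<in> J \<Longrightarrow> z j \<le> z i\<^sub>0"
    and j: "j \<in> J" "j \<noteq> i\<^sub>0"
  shows "z j \<le> z i\<^sub>0 - m"
proof -
  have "m \<le> \<bar>z j - z i\<^sub>0\<bar>" "z j \<le> z i\<^sub>0"
    using sep[OF j(1) max(1) j(2)] max(2)[OF j(1)] by auto
  then show ?thesis by linarith
qed

lemma sum_le_of_separated:
  fixes z :: "'a \<Rightarrow> int"
  assumes "finite J" "\<And>i j. i \<in> J \<Longrightarrow> j \<in> J \<Longrightarrow> i \<noteq> j \<Longrightarrow> m \<le> \<bar>z i - z j\<bar>"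
    "\<And>i. i \<in> J \<Longrightarrow> z i \<le> M"
  shows "(\<Sum>i\<in>J. z i) \<le> (\<Sum>r<card J. M - int r * m)"
  using assms
proof (induction "card J" arbitrary: J M)
  case (Suc c)
  have "Max (z ` J) \<in> z ` J"
    using Suc.prems(1) Suc.hyps(2) by (intro Max_in) auto
  then obtain i\<^sub>0 where i\<^sub>0: "i\<^sub>0 \<in> J" "z i\<^sub>0 = Max (z ` J)"
    by (metis imageE)
  then have max: "z j \<le> z i\<^sub>0" if "j \<in> J" for j
    using Suc.prems(1) that by simp
  have below: "z j \<le> M - m" if "j \<in> J - {i\<^sub>0}" for j
  proof -
    have "z j \<le> z i\<^sub>0 - m"
      using separated_le_max[of J m z i\<^sub>0, OF Suc.prems(2) i\<^sub>0(1) max] that by blast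
    then show ?thesis using Suc.prems(3)[OF i\<^sub>0(1)] by linarith
  qed
  have "(\<Sum>i\<in>J - {i\<^sub>0}. z i) \<le> (\<Sum>r<c. (M - m) - int r * m)"
    using Suc.hyps(1)[of "J - {i\<^sub>0}" "M - m"] Suc.prems i\<^sub>0(1) below
    by (auto simp: Suc.hyps(2)[symmetric])
  then have "(\<Sum>i\<in>J. z i) \<le> M + (\<Sum>r<c. (M - m) - int r * m)"
    using Suc.prems(1) i\<^sub>0(1) add_mono[OF Suc.prems(3)[OF i\<^sub>0(1)]] by (simp add: sum.remove)
  also have "\<dots> = (\<Sum>r<Suc c. M - int r * m)"
    unfolding sum.lessThan_Suc_shift by (simp add: algebra_simps)
  finally show ?case using Suc.hyps(2) by simp
qed simp

lemma sum_ge_of_separated: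
  fixes z :: "'a \<Rightarrow> int"
  assumes "finite J" "\<And>i j. i \<in> J \<Longrightarrow> j \<in> J \<Longrightarrow> i \<noteq> j \<Longrightarrow> m \<le> \<bar>z i - z j\<bar>"
    "\<And>i. i \<in> J \<Longrightarrow> L \<le> z i"
  shows "(\<Sum>r<card J. L + int r * m) \<le> (\<Sum>i\<in>J. z i)"
proof -
  have "(\<Sum>i\<in>J. - z i) \<le> (\<Sum>r<card J. - L - int r * m)"
    by (rule sum_le_of_separated) (use assms in \<open>auto simp: abs_minus_commute\<close>)
  moreover have "(\<Sum>r<card J. - L - int r * m) = - (\<Sum>r<card J. L + int r * m)"
    by (simp add: sum_negf[symmetric])
  ultimately show ?thesis by (simp add: sum_negf)
qed

lemma separated_sum_eq_bound_max:
  fixes z :: "'a \<Rightarrow> int"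
  assumes fin: "finite J"
    and sep: "\<And>i j. i \<in> J \<Longrightarrow> j \<in> J \<Longrightarrow> i \<noteq> j \<Longrightarrow> m \<le> \<bar>z i - z j\<bar>"
    and ub: "\<And>i. i \<in> J \<Longrightarrow> z i \<le> M"
    and max: "i\<^sub>1 \<in> J" "\<And>j. j \<in> J \<Longrightarrow> z j \<le> z i\<^sub>1"
    and sum: "(\<Sum>i\<in>J. z i) = (\<Sum>r<card J. M - int r * m)"
  shows "z i\<^sub>1 = M" "(\<Sum>i\<in>J - {i\<^sub>1}. z i) = (\<Sum>r<card (J - {i\<^sub>1}). (M - m) - int r * m)"
proof -
  let ?J' = "J - {i\<^sub>1}"
  have below: "z j \<le> M - m" if "j \<in> ?J'" for j
  proof -
    have "z j \<le> z i\<^sub>1 - m"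
      using separated_le_max[of J m z i\<^sub>1, OF sep max] that by blast
    then show ?thesis using ub[OF max(1)] by linarith
  qed
  have bound: "(\<Sum>i\<in>?J'. z i) \<le> (\<Sum>r<card ?J'. (M - m) - int r * m)"
    by (rule sum_le_of_separated) (use fin sep below in auto)
  have "(\<Sum>r<card J. M - int r * m) = M + (\<Sum>r<card ?J'. (M - m) - int r * m)"
    unfolding card_Suc_Diff1[OF fin max(1), symmetric]
    by (simp add: sum.lessThan_Suc_shift algebra_simps del: sum.lessThan_Suc)
  moreover have "(\<Sum>i\<in>J. z i) = z i\<^sub>1 + (\<Sum>i\<in>?J'. z i)"
    using fin max(1) by (simp add: sum.remove)
  ultimately have "z i\<^sub>1 + (\<Sum>i\<in>?J'. z i) = M + (\<Sum>r<card ?J'. (M - m) - int r * m)"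
    using sum by simp
  then show "z i\<^sub>1 = M" "(\<Sum>i\<in>?J'. z i) = (\<Sum>r<card ?J'. (M - m) - int r * m)"
    using bound ub[OF max(1)] by linarith+
qed

lemma card_less_Diff_min:
  fixes J :: "'a::linorder set"
  assumes "finite J" "i\<^sub>0 \<in> J" "\<And>j. j \<in> J \<Longrightarrow> i\<^sub>0 \<le> j" "i \<in> J" "i \<noteq> i\<^sub>0"
  shows "card {j\<in>J. j < i} = Suc (card {j\<in>J - {i\<^sub>0}. j < i})"
proof -
  have "{j\<in>J. j < i} = insert i\<^sub>0 {j\<in>J - {i\<^sub>0}. j < i}" "i\<^sub>0 \<notin> {j\<in>J - {i\<^sub>0}. j < i}"
    using assms by (auto simp: order.order_iff_strict)
  then show ?thesis
    using assms(1) by simp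
qed

lemma staircase_of_separated_sum_eq:
  fixes z :: "'a::linorder \<Rightarrow> int"
  assumes m: "1 \<le> m" and fin: "finite J"
    and gap: "\<And>i j. i \<in> J \<Longrightarrow> j \<in> J \<Longrightarrow> i < j \<Longrightarrow> z i + m + 1 \<le> z j \<or> z j + m \<le> z i"
    and ub: "\<And>i. i \<in> J \<Longrightarrow> z i \<le> M"
    and sum: "(\<Sum>i\<in>J. z i) = (\<Sum>r<card J. M - int r * m)"
  shows "\<forall>i\<in>J. z i = M - int (card {j\<in>J. j < i}) * m"
  using fin gap ub sum
proof (induction "card J" arbitrary: J M)
  case (Suc c)
  have sep: "m \<le> \<bar>z i - z j\<bar>" if "i \<in> J" "j \<in> J" "i \<noteq> j" for i j
  proof (cases "i < j")
    case True
    then show ?thesis using Suc.prems(2)[of i j] that m by auto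
  next
    case False
    then have "j < i" using that by auto
    then show ?thesis using Suc.prems(2)[of j i] that m by auto
  qed
  have "Max (z ` J) \<in> z ` J"
    using Suc.prems(1) Suc.hyps(2) by (intro Max_in) auto
  then obtain i\<^sub>1 where i\<^sub>1: "i\<^sub>1 \<in> J" "z i\<^sub>1 = Max (z ` J)"
    by (metis imageE)
  then have max: "z j \<le> z i\<^sub>1" if "j \<in> J" for j
    using Suc.prems(1) that by simp
  let ?J' = "J - {i\<^sub>1}"
  have card': "card ?J' = c" using Suc.hyps(2) i\<^sub>1(1) Suc.prems(1) by simp
  note bound_max = separated_sum_eq_bound_max[OF Suc.prems(1) sep Suc.prems(3) i\<^sub>1(1) max Suc.prems(4)]
  from bound_max(1) have top: "z i\<^sub>1 = M" .
  from bound_max(2) have rest: "(\<Sum>i\<in>?J'. z i) = (\<Sum>r<card ?J'. (M - m) - int r * m)" .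
  have below: "z j \<le> M - m" if "j \<in> ?J'" for j
  proof -
    have "z j \<le> z i\<^sub>1 - m"
      using separated_le_max[of J m z i\<^sub>1, OF sep i\<^sub>1(1) max] that by blast
    then show ?thesis using top by simp
  qed
  have IH: "z i = (M - m) - int (card {j\<in>?J'. j < i}) * m" if "i \<in> ?J'" for i
    using Suc.hyps(1)[of ?J' "M - m"] card' Suc.prems(1,2) below rest that by auto
  txt \<open>The maximum sits at the smallest index: otherwise the smallest index would be at
    height \<open>M - m\<close> below a larger index at height \<open>M\<close>, violating the gap condition.\<close>
  define i\<^sub>0 where "i\<^sub>0 = Min J"
  have i\<^sub>0: "i\<^sub>0 \<in> J" "\<And>j. j \<in> J \<Longrightarrow> i\<^sub>0 \<le> j"
    using Suc.prems(1) i\<^sub>1(1) by (auto simp: i\<^sub>0_def intro!: Min_in)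
  have "i\<^sub>1 = i\<^sub>0"
  proof (rule ccontr)
    assume ne: "i\<^sub>1 \<noteq> i\<^sub>0"
    then have "i\<^sub>0 \<in> ?J'" "{j\<in>?J'. j < i\<^sub>0} = {}"
      using i\<^sub>0 by (auto dest: leD)
    then have "z i\<^sub>0 = M - m"
      using IH[of i\<^sub>0] by (simp only: card.empty of_nat_0 mult_zero_left diff_0_right)
    moreover have "i\<^sub>0 < i\<^sub>1"
      using le_neq_trans[OF i\<^sub>0(2)[OF i\<^sub>1(1)]] ne by simp
    ultimately show False using Suc.prems(2)[OF i\<^sub>0(1) i\<^sub>1(1)] top m by auto
  qed
  show ?case
  proof
    fix i assume i: "i \<in> J"
    show "z i = M - int (card {j\<in>J. j < i}) * m"
    proof (cases "i = i\<^sub>0")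
      case True
      then have "{j\<in>J. j < i} = {}" using i\<^sub>0 by force
      then show ?thesis using True top \<open>i\<^sub>1 = i\<^sub>0\<close>
        by (simp only: card.empty of_nat_0 mult_zero_left diff_0_right)
    next
      case False
      then have "card {j\<in>J. j < i} = Suc (card {j\<in>?J'. j < i})"
        using card_less_Diff_min[OF Suc.prems(1) i\<^sub>0 i] \<open>i\<^sub>1 = i\<^sub>0\<close> by simp
      then show ?thesis using IH[of i] False i \<open>i\<^sub>1 = i\<^sub>0\<close> by (simp add: algebra_simps)
    qed
  qed
qed simp

lemma lagrange_denom_of_nat_atLeastAtMost:
  assumes "c \<le> K"
  shows "lagrange_denom (of_nat ` {0..K} :: 'a::{comm_ring_1, ring_char_0} set) (of_nat c)
    = (-1) ^ (K - c) * fact c * fact (K - c)"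
proof -
  have "lagrange_denom (of_nat ` {0..K} :: 'a set) (of_nat c) = (\<Prod>b\<in>of_nat ` ({0..K} - {c}). of_nat c - b)"
    unfolding lagrange_denom_def by (rule prod.cong) (auto simp: image_iff)
  also have "\<dots> = (\<Prod>l\<in>{0..K} - {c}. of_nat c - of_nat l)"
    by (subst prod.reindex) (auto simp: inj_on_def)
  also have "\<dots> = (-1) ^ (K - c) * fact c * fact (K - c)"
    using assms
  proof (induction K rule: dec_induct)
    case base
    have "{0..c} - {c} = {0..<c}" by auto
    then show ?case by (simp add: fact_prod_rev of_nat_diff)
  next
    case (step K)
    then have "{0..Suc K} - {c} = insert (Suc K) ({0..K} - {c})" by auto
    then show ?case
      using step by (simp add: Suc_diff_le of_nat_diff algebra_simps)
  qed
  finally show ?thesis .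
qed

lemma prod_lessThan_shift_eq_fact_div: "(\<Prod>t<L. of_nat (a + 1 + t)) = (fact (a + L) / fact a :: 'a::field_char_0)"
proof (induction L)
  case (Suc L)
  then have "(\<Prod>t<Suc L. of_nat (a + 1 + t)) = fact (a + L) / fact a * (of_nat (Suc (a + L)) :: 'a)"
    by simp
  then show ?case by (simp add: field_simps)
qed simp

lemma prod_index_pairs_telescope:
  fixes g :: "nat \<Rightarrow> 'a::field"
  assumes nz: "\<And>d. g d \<noteq> 0"
  shows "(\<Prod>(i, j)\<in>index_pairs n. g (j - i + 1) / g (j - i - 1)) = (\<Prod>j<n. g (j + 1) * g j / (g 1 * g 0))"
proof -
  have telescope: "(\<Prod>d\<in>{1..j}. g (d + 1) / g (d - 1)) = g (j + 1) * g j / (g 1 * g 0)" for j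
  proof (induction j)
    case (Suc j)
    have "{1..Suc j} = insert (Suc j) {1..j}" by auto
    then show ?case using Suc nz by (simp add: field_simps)
  qed (simp add: nz)
  have "(\<Prod>(i, j)\<in>index_pairs n. g (j - i + 1) / g (j - i - 1))
      = (\<Prod>j<n. \<Prod>i<j. g (Suc j - Suc i + 1) / g (Suc j - Suc i - 1))"
    by (rule prod_index_pairs_nested)
  also have "\<dots> = (\<Prod>j<n. \<Prod>d\<in>{1..j}. g (d + 1) / g (d - 1))"
  proof (rule prod.cong[OF refl])
    fix j
    show "(\<Prod>i<j. g (Suc j - Suc i + 1) / g (Suc j - Suc i - 1)) = (\<Prod>d\<in>{1..j}. g (d + 1) / g (d - 1))"
      by (rule prod.reindex_bij_witness[where i="\<lambda>d. j - d" and j="\<lambda>i. j - i"]) auto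
  qed
  also have "\<dots> = (\<Prod>j<n. g (j + 1) * g j / (g 1 * g 0))"
    by (rule prod.cong[OF refl]) (rule telescope)
  finally show ?thesis .
qed

lemma neg_one_power_pred_mult_cancel:
  assumes "0 < m"
  shows "(-1::'a::comm_ring_1) ^ ((m - 1) * c) * ((-1) ^ (m * c) * (-1) ^ c) = 1"
proof -
  have "(m - 1) * c + (m * c + c) = 2 * (m * c)"
    using assms by (cases m) (auto simp: algebra_simps)
  then have "(-1::'a) ^ ((m - 1) * c) * ((-1) ^ (m * c) * (-1) ^ c) = (-1) ^ (2 * (m * c))"
    by (simp only: power_add[symmetric])
  then show ?thesis
    by simp
qed

definition var_sum :: "nat \<Rightarrow> mpoly_int" where
  "var_sum n = (\<Sum>i\<in>{1..n}. var i)"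

definition vandermonde_power :: "nat \<Rightarrow> nat \<Rightarrow> mpoly_int" where
  "vandermonde_power n e = (\<Prod>(i, j)\<in>index_pairs n. (var j - var i) ^ e)"

definition perm_monom :: "nat \<Rightarrow> (nat \<Rightarrow> nat) \<Rightarrow> (nat \<Rightarrow>\<^sub>0 nat)" where
  "perm_monom n p = (\<Sum>i<n. Poly_Mapping.single (Suc i) (p i))"

definition grid_points :: "nat \<Rightarrow> real set" where
  "grid_points e = of_nat ` {0..e}"

lemma finite_grid_points [simp]: "finite (grid_points e)"
  by (simp add: grid_points_def)

lemma grid_points_nonempty [simp]: "grid_points e \<noteq> {}"
  by (simp add: grid_points_def)

lemma card_grid_points [simp]: "card (grid_points e) = Suc e"
  by (simp add: grid_points_def card_image inj_on_def)

lemma lookup_monomial_exps: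
  "Poly_Mapping.lookup (monomial_exps n e) i = (if i \<in> {1..n} then e i else 0)"
  by (simp add: monomial_exps_def lookup_sum lookup_single when_def)

lemma keys_monomial_exps: "Poly_Mapping.keys (monomial_exps n e) \<subseteq> {1..n}"
  by (auto simp: in_keys_iff lookup_monomial_exps split: if_splits)

lemma monom_degree_monomial_exps: "monom_degree (monomial_exps n e) = (\<Sum>i\<in>{1..n}. e i)"
  by (subst monom_degree_eq_sum[OF _ keys_monomial_exps]) (auto simp: lookup_monomial_exps)

lemma lookup_perm_monom:
  "Poly_Mapping.lookup (perm_monom n p) i = (if i \<in> {1..n} then p (i - 1) else 0)"
proof -
  have "Poly_Mapping.lookup (perm_monom n p) i = (\<Sum>l<n. if l = i - 1 \<and> i \<noteq> 0 then p l else 0)"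
    by (auto simp: perm_monom_def lookup_sum lookup_single when_def intro!: sum.cong)
  then show ?thesis by auto
qed

lemma mpoly_eval_var_sum: "mpoly_eval a (var_sum n) = (\<Sum>i\<in>{1..n}. a i)"
  by (simp add: var_sum_def mpoly_eval_sum)

lemma mpoly_eval_vandermonde_power:
  "mpoly_eval a (vandermonde_power n e) = (\<Prod>(i, j)\<in>index_pairs n. (a j - a i) ^ e)"
  by (simp add: vandermonde_power_def mpoly_eval_prod mpoly_eval_power mpoly_eval_diff case_prod_beta)

lemma vars_in_var_sum: "vars_in {1..n} (var_sum n)"
  unfolding var_sum_def by (intro vars_in_sum vars_in_var)

lemma vars_in_vandermonde_power: "vars_in {1..n} (vandermonde_power n e)"
  unfolding vandermonde_power_def case_prod_beta
  by (intro vars_in_prod vars_in_power vars_in_diff vars_in_var) (auto simp: index_pairs_def)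

lemma total_degree_le_var_sum: "total_degree_le 1 (var_sum n)"
  unfolding var_sum_def by (intro total_degree_le_sum total_degree_le_var)

lemma same_top_form_var_sum_shift: "same_top_form 1 (var_sum n - of_int c) (var_sum n)"
  by (rule same_top_form_diff_const[OF total_degree_le_var_sum])

lemma same_top_form_var_diff_shift: "same_top_form 1 (var j - var i - of_int c) (var j - var i)"
  by (intro same_top_form_diff_const total_degree_le_diff total_degree_le_var)

lemma total_degree_le_vandermonde_power:
  "total_degree_le ((n choose 2) * e) (vandermonde_power n e)"
proof -
  have "total_degree_le (\<Sum>x\<in>index_pairs n. e * 1) (vandermonde_power n e)"
    unfolding vandermonde_power_def case_prod_beta
    by (intro total_degree_le_prod total_degree_le_power total_degree_le_diff total_degree_le_var)
  then show ?thesis by (simp add: card_index_pairs mult.commute)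
qed

lemma vandermonde_power_add:
  "vandermonde_power n (d + e) = vandermonde_power n d * vandermonde_power n e"
  by (simp add: vandermonde_power_def power_add prod.distrib case_prod_beta)

lemma vandermonde_power_1_eq_sum_permutations:
  "vandermonde_power n 1
    = (\<Sum>p | p permutes {0..<n}. of_int (sign p) * Poly_Mapping.single (perm_monom n p) 1)"
proof -
  have "vandermonde_power n 1 = (\<Prod>j<n. \<Prod>i<j. var (Suc j) - var (Suc i))"
    by (simp add: vandermonde_power_def prod_index_pairs_nested)
  also have "\<dots> = (\<Sum>p | p permutes {0..<n}. of_int (sign p) * (\<Prod>i<n. var (Suc i) ^ p i))"
    by (rule vandermonde_eq_sum_permutations)
  also have "\<dots> = (\<Sum>p | p permutes {0..<n}. of_int (sign p) * Poly_Mapping.single (perm_monom n p) 1)"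
    by (simp add: var_power perm_monom_def prod_single_one)
  finally show ?thesis .
qed

locale coeff_parameters =
  fixes n m k :: nat
  assumes n_pos: "0 < n" and m_pos: "0 < m" and k_large: "m * (n - 1) < k"
begin

definition sum_exp :: nat where
  "sum_exp = (k - 1) * n - m * n * (n - 1)"

definition odd_poly :: mpoly_int where
  "odd_poly = var_sum n ^ sum_exp * vandermonde_power n (2 * m - 1)"

definition even_poly :: mpoly_int where
  "even_poly = var_sum n ^ sum_exp * vandermonde_power n (2 * m)"

definition staircase_exp :: "nat \<Rightarrow> nat" where
  "staircase_exp i = k - n + i - 1"

definition min_sum :: int where
  "min_sum = (\<Sum>r<n. int r * int m)"

text \<open>A polynomial with the same top form as \<open>even_poly\<close> that vanishes at every point of
  the grid \<open>{0..k-1}\<^sup>n\<close> except \<open>peak\<close>: the first factor kills the points whose coordinate sum is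
  too small, the second one those where two coordinates are too close.\<close>

definition shifted_even_poly :: mpoly_int where
  "shifted_even_poly = (\<Prod>u<sum_exp. var_sum n - of_int (min_sum + int u))
     * (\<Prod>(i, j)\<in>index_pairs n. \<Prod>t<2 * m. var j - var i - of_int (int t - int m + 1))"

definition peak :: "nat \<Rightarrow> real" where
  "peak = restrict (\<lambda>i. real (k - 1 - (i - 1) * m)) {1..n}"

lemma sum_exp_eq: "sum_exp = (k - 1 - m * (n - 1)) * n"
  unfolding sum_exp_def diff_mult_distrib by (simp add: ac_simps)

lemma n_le_k: "n \<le> k"
proof -
  have "n - 1 \<le> m * (n - 1)"
    using m_pos by simp
  then show ?thesis
    using k_large n_pos by linarith
qed

lemma index_offset_le:
  assumes "i \<in> {1..n}"
  shows "(i - 1) * m \<le> k - 1"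
proof -
  have "i - 1 \<le> n - 1"
    using assms by auto
  then have "(i - 1) * m \<le> (n - 1) * m"
    by (rule mult_le_mono1)
  moreover have "(n - 1) * m \<le> k - 1"
    using k_large by (simp add: mult.commute)
  ultimately show ?thesis
    by (rule order.trans)
qed

lemma sum_exp_add: "sum_exp + m * (2 * (n choose 2)) = (k - 1) * n"
proof -
  have "m * (n - 1) * n \<le> (k - 1) * n"
    using k_large by (intro mult_le_mono1) simp
  then have "m * n * (n - 1) \<le> (k - 1) * n"
    by (simp add: ac_simps)
  moreover have "m * (2 * (n choose 2)) = m * n * (n - 1)"
    by (simp add: two_times_choose_two)
  ultimately show ?thesis
    unfolding sum_exp_def by (simp only: le_add_diff_inverse2)
qed

lemma sum_staircase_exp: "(\<Sum>i\<in>{1..n}. staircase_exp i) + (n choose 2) = n * (k - 1)"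
proof -
  have "(\<Sum>i\<in>{1..n}. n - i) = (\<Sum>j<n. j)"
    by (rule sum.reindex_bij_witness[where i="\<lambda>j. n - j" and j="\<lambda>i. n - i"]) auto
  then have "(\<Sum>i\<in>{1..n}. n - i) = n choose 2"
    by (simp add: sum_lessThan_eq_choose_2)
  moreover have "(\<Sum>i\<in>{1..n}. staircase_exp i) + (\<Sum>i\<in>{1..n}. n - i) = (\<Sum>i\<in>{1..n}. k - 1)"
    unfolding sum.distrib[symmetric] using n_le_k by (intro sum.cong) (auto simp: staircase_exp_def)
  ultimately show ?thesis by simp
qed

lemma degree_odd_poly_eq: "sum_exp + (n choose 2) * (2 * m - 1) = (\<Sum>i\<in>{1..n}. staircase_exp i)"
proof -
  have "(n choose 2) * (2 * m - 1) + (n choose 2) = m * (2 * (n choose 2))"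
    using m_pos by (cases m) (simp_all add: algebra_simps)
  then have "sum_exp + (n choose 2) * (2 * m - 1) + (n choose 2) = (k - 1) * n"
    by (simp only: add.assoc sum_exp_add)
  also have "\<dots> = (\<Sum>i\<in>{1..n}. staircase_exp i) + (n choose 2)"
    using sum_staircase_exp by (simp add: mult.commute)
  finally show ?thesis by simp
qed

lemma degree_even_poly_eq: "sum_exp + (n choose 2) * (2 * m) = (\<Sum>i\<in>{1..n}. k - 1)"
  using sum_exp_add by (simp add: algebra_simps)

lemma vars_in_odd_poly: "vars_in {1..n} odd_poly"
  unfolding odd_poly_def
  by (intro vars_in_mult vars_in_power vars_in_var_sum vars_in_vandermonde_power)

lemma total_degree_le_odd_poly: "total_degree_le (\<Sum>i\<in>{1..n}. staircase_exp i) odd_poly"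
  unfolding odd_poly_def degree_odd_poly_eq[symmetric]
  using total_degree_le_mult[OF total_degree_le_power[OF total_degree_le_var_sum]
      total_degree_le_vandermonde_power]
  by simp

lemma vars_in_shifted_even_poly: "vars_in {1..n} shifted_even_poly"
  unfolding shifted_even_poly_def case_prod_beta
  by (intro vars_in_mult vars_in_prod vars_in_diff vars_in_var_sum vars_in_of_int vars_in_var)
    (auto simp: index_pairs_def)

lemma same_top_form_shifted_even_poly:
  "same_top_form (\<Sum>i\<in>{1..n}. k - 1) shifted_even_poly even_poly"
proof -
  have "same_top_form (\<Sum>u<sum_exp. 1) (\<Prod>u<sum_exp. var_sum n - of_int (min_sum + int u))
      (\<Prod>u<sum_exp. var_sum n)"
    by (intro same_top_form_prod same_top_form_var_sum_shift)
  then have sum_part: "same_top_form sum_exp (\<Prod>u<sum_exp. var_sum n - of_int (min_sum + int u))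
      (var_sum n ^ sum_exp)"
    by simp
  have "same_top_form (\<Sum>x\<in>index_pairs n. \<Sum>t<2 * m. 1)
      (\<Prod>(i, j)\<in>index_pairs n. \<Prod>t<2 * m. var j - var i - of_int (int t - int m + 1))
      (\<Prod>(i, j)\<in>index_pairs n. \<Prod>t<2 * m. var j - var i)"
    unfolding case_prod_beta by (intro same_top_form_prod same_top_form_var_diff_shift)
  then have pair_part: "same_top_form ((n choose 2) * (2 * m))
      (\<Prod>(i, j)\<in>index_pairs n. \<Prod>t<2 * m. var j - var i - of_int (int t - int m + 1))
      (vandermonde_power n (2 * m))"
    by (simp add: vandermonde_power_def card_index_pairs case_prod_beta)
  show ?thesis
    unfolding shifted_even_poly_def even_poly_def degree_even_poly_eq[symmetric]
    by (rule same_top_form_mult[OF sum_part pair_part])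
qed

lemma mpoly_eval_shifted_even_poly:
  "mpoly_eval a shifted_even_poly = (\<Prod>u<sum_exp. (\<Sum>i\<in>{1..n}. a i) - of_int (min_sum + int u))
     * (\<Prod>(i, j)\<in>index_pairs n. \<Prod>t<2 * m. a j - a i - of_int (int t - int m + 1))"
  by (simp only: shifted_even_poly_def mpoly_eval_mult mpoly_eval_prod mpoly_eval_diff
      mpoly_eval_var_sum mpoly_eval_of_int mpoly_eval_var case_prod_unfold)

subsection \<open>Antisymmetry of \<open>odd_poly\<close>\<close>

lemma mpoly_eval_odd_poly_relabel:
  assumes p: "p permutes {0..<n}"
  shows "mpoly_eval (\<lambda>i. y (n - p (i - 1))) odd_poly = signof p * (-1) ^ (n choose 2) * mpoly_eval y odd_poly"
proof -
  have "(\<Sum>i\<in>{1..n}. y (n - p (i - 1))) = (\<Sum>i\<in>{1..n}. y i)"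
    using sum.reindex_bij_betw[OF bij_betw_reverse_permute[OF p], of y] by simp
  moreover have "odd (2 * m - 1)" using m_pos by simp
  ultimately show ?thesis
    unfolding odd_poly_def mpoly_eval_mult mpoly_eval_power mpoly_eval_var_sum mpoly_eval_vandermonde_power
      prod_index_pairs_diff_power_relabel[OF p \<open>odd (2 * m - 1)\<close>] by simp
qed

lemma grid_sum_odd_poly_relabel:
  fixes A :: "nat \<Rightarrow> real set"
  assumes p: "p permutes {0..<n}"
  shows "(\<Sum>a\<in>PiE {1..n} (\<lambda>i. A (n - p (i - 1))).
        mpoly_eval a odd_poly / (\<Prod>i\<in>{1..n}. lagrange_denom (A (n - p (i - 1))) (a i)))
    = signof p * (-1) ^ (n choose 2)
      * (\<Sum>b\<in>PiE {1..n} A. mpoly_eval b odd_poly / (\<Prod>i\<in>{1..n}. lagrange_denom (A i) (b i)))"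
proof -
  let ?I = "{1..n}"
  let ?\<tau> = "\<lambda>i. n - p (i - 1)"
  let ?w = "\<lambda>b. \<Prod>i\<in>?I. lagrange_denom (A i) (b i)"
  have \<tau>: "bij_betw ?\<tau> ?I ?I" by (rule bij_betw_reverse_permute[OF p])
  have "(\<Sum>a\<in>PiE ?I (\<lambda>i. A (?\<tau> i)). mpoly_eval a odd_poly / (\<Prod>i\<in>?I. lagrange_denom (A (?\<tau> i)) (a i)))
      = (\<Sum>b\<in>PiE ?I A. mpoly_eval (restrict (\<lambda>i. b (?\<tau> i)) ?I) odd_poly
          / (\<Prod>i\<in>?I. lagrange_denom (A (?\<tau> i)) (restrict (\<lambda>i. b (?\<tau> i)) ?I i)))"
    by (rule sum_PiE_reindex[OF \<tau>])
  also have "\<dots> = (\<Sum>b\<in>PiE ?I A. signof p * (-1) ^ (n choose 2) * (mpoly_eval b odd_poly / ?w b))"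
  proof (rule sum.cong[OF refl])
    fix b :: "nat \<Rightarrow> real"
    have "mpoly_eval (restrict (\<lambda>i. b (?\<tau> i)) ?I) odd_poly = mpoly_eval (\<lambda>i. b (?\<tau> i)) odd_poly"
      by (rule mpoly_eval_cong[OF vars_in_odd_poly]) simp
    moreover have "(\<Prod>i\<in>?I. lagrange_denom (A (?\<tau> i)) (restrict (\<lambda>i. b (?\<tau> i)) ?I i)) = ?w b"
      using prod.reindex_bij_betw[OF \<tau>, of "\<lambda>j. lagrange_denom (A j) (b j)"] by simp
    ultimately show "mpoly_eval (restrict (\<lambda>i. b (?\<tau> i)) ?I) odd_poly
        / (\<Prod>i\<in>?I. lagrange_denom (A (?\<tau> i)) (restrict (\<lambda>i. b (?\<tau> i)) ?I i))
        = signof p * (-1) ^ (n choose 2) * (mpoly_eval b odd_poly / ?w b)"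
      using mpoly_eval_odd_poly_relabel[OF p, of b] by simp
  qed
  finally show ?thesis
    by (simp add: sum_distrib_left)
qed

text \<open>Apply the coefficient formula on the grid \<open>\<Prod>i. {0..staircase_exp (\<tau> i)}\<close>, where
  \<open>\<tau> i = n - p (i - 1)\<close>, and relabel it into the grid \<open>\<Prod>i. {0..staircase_exp i}\<close>.\<close>

lemma coeff_odd_poly_relabel:
  assumes p: "p permutes {0..<n}"
  shows "real_of_int (Poly_Mapping.lookup odd_poly (monomial_exps n (\<lambda>_. k - 1) - perm_monom n p))
       = signof p * (-1) ^ (n choose 2) * of_int (Poly_Mapping.lookup odd_poly (monomial_exps n staircase_exp))"
proof -
  let ?I = "{1..n}"
  let ?\<tau> = "\<lambda>i. n - p (i - 1)"
  let ?A = "\<lambda>j. grid_points (staircase_exp j)"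
  have p_less: "p (i - 1) < n" if "i \<in> ?I" for i
    using p that by (auto simp: permutes_in_image)
  have "real_of_int (Poly_Mapping.lookup odd_poly (monomial_exps n (\<lambda>_. k - 1) - perm_monom n p))
      = (\<Sum>a\<in>PiE ?I (\<lambda>i. ?A (?\<tau> i)). mpoly_eval a odd_poly / (\<Prod>i\<in>?I. lagrange_denom (?A (?\<tau> i)) (a i)))"
  proof (rule coeff_eq_grid_sum)
    show "total_degree_le (\<Sum>i\<in>?I. card (?A (?\<tau> i)) - 1) odd_poly"
      using total_degree_le_odd_poly sum.reindex_bij_betw[OF bij_betw_reverse_permute[OF p], of staircase_exp]
      by simp
    show "Poly_Mapping.lookup (monomial_exps n (\<lambda>_. k - 1) - perm_monom n p) i = card (?A (?\<tau> i)) - 1"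
      if "i \<in> ?I" for i
    proof -
      have "p (i - 1) \<le> k - 1" using p_less[OF that] n_le_k by linarith
      then show ?thesis
        using that p_less[OF that] n_le_k
        by (simp add: lookup_minus lookup_monomial_exps lookup_perm_monom staircase_exp_def)
    qed
    show "Poly_Mapping.keys (monomial_exps n (\<lambda>_. k - 1) - perm_monom n p) \<subseteq> ?I"
      by (auto simp: in_keys_iff lookup_minus lookup_monomial_exps lookup_perm_monom split: if_splits)
  qed (use vars_in_odd_poly in auto)
  also have "\<dots> = signof p * (-1) ^ (n choose 2)
      * (\<Sum>b\<in>PiE ?I ?A. mpoly_eval b odd_poly / (\<Prod>i\<in>?I. lagrange_denom (?A i) (b i)))"
    by (rule grid_sum_odd_poly_relabel[OF p])
  also have "(\<Sum>b\<in>PiE ?I ?A. mpoly_eval b odd_poly / (\<Prod>i\<in>?I. lagrange_denom (?A i) (b i)))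
      = real_of_int (Poly_Mapping.lookup odd_poly (monomial_exps n staircase_exp))"
    by (rule coeff_eq_grid_sum[symmetric])
      (use vars_in_odd_poly total_degree_le_odd_poly keys_monomial_exps in \<open>auto simp: lookup_monomial_exps\<close>)
  finally show ?thesis .
qed

lemma coeff_even_poly_eq_coeff_odd_poly:
  "real_of_int (Poly_Mapping.lookup even_poly (monomial_exps n (\<lambda>_. k - 1)))
    = fact n * (-1) ^ (n choose 2) * of_int (Poly_Mapping.lookup odd_poly (monomial_exps n staircase_exp))"
proof -
  let ?E = "monomial_exps n (\<lambda>_. k - 1)"
  let ?P = "{p. p permutes {0..<n}}"
  have perm_monom_le: "Poly_Mapping.lookup (perm_monom n p) i \<le> Poly_Mapping.lookup ?E i"
    if "p \<in> ?P" for p i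
  proof (cases "i \<in> {1..n}")
    case True
    then have "p (i - 1) < n" using that by (auto simp: permutes_in_image)
    then show ?thesis using True n_le_k by (simp add: lookup_monomial_exps lookup_perm_monom)
  qed (simp add: lookup_monomial_exps lookup_perm_monom del: atLeastAtMost_iff)
  have "even_poly = odd_poly * vandermonde_power n 1"
    using m_pos by (simp add: even_poly_def odd_poly_def mult.assoc flip: vandermonde_power_add)
  then have "Poly_Mapping.lookup even_poly ?E
      = (\<Sum>p\<in>?P. sign p * Poly_Mapping.lookup (odd_poly * Poly_Mapping.single (perm_monom n p) 1) ?E)"
    unfolding vandermonde_power_1_eq_sum_permutations
    by (simp add: sum_distrib_left lookup_sum mult.left_commute[of odd_poly] lookup_of_int_mult)
  also have "\<dots> = (\<Sum>p\<in>?P. sign p * Poly_Mapping.lookup odd_poly (?E - perm_monom n p))"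
    using perm_monom_le by (simp add: lookup_mult_single)
  finally have "real_of_int (Poly_Mapping.lookup even_poly ?E)
      = (\<Sum>p\<in>?P. signof p * real_of_int (Poly_Mapping.lookup odd_poly (?E - perm_monom n p)))"
    by simp
  also have "\<dots> = (\<Sum>p\<in>?P. (-1) ^ (n choose 2) * of_int (Poly_Mapping.lookup odd_poly (monomial_exps n staircase_exp)))"
  proof (rule sum.cong[OF refl])
    fix p assume "p \<in> ?P"
    then have p: "p permutes {0..<n}" by simp
    have "(signof p :: real) * signof p = 1"
      by (simp add: sign_def)
    then show "signof p * real_of_int (Poly_Mapping.lookup odd_poly (?E - perm_monom n p))
        = (-1) ^ (n choose 2) * of_int (Poly_Mapping.lookup odd_poly (monomial_exps n staircase_exp))"
      unfolding coeff_odd_poly_relabel[OF p] by (simp add: algebra_simps)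
  qed
  also have "\<dots> = fact n * (-1) ^ (n choose 2) * of_int (Poly_Mapping.lookup odd_poly (monomial_exps n staircase_exp))"
    by (simp add: card_permutations)
  finally show ?thesis .
qed

subsection \<open>The only surviving grid point\<close>

lemma sum_peak_coordinates: "(\<Sum>r<n. int (k - 1) - int r * int m) = min_sum + int sum_exp"
proof -
  have "int sum_exp + int m * (2 * int (n choose 2)) = int (k - 1) * int n"
    using sum_exp_add by (metis of_nat_add of_nat_mult of_nat_numeral)
  moreover have "2 * (\<Sum>r<n. int r) = 2 * int (n choose 2)"
    by (simp add: sum_lessThan_eq_choose_2 flip: of_nat_sum)
  ultimately show ?thesis
    by (simp add: min_sum_def sum_subtractf sum_distrib_right[symmetric] algebra_simps)
qed

lemma peak_eq:
  assumes "i \<in> {1..n}"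
  shows "peak i = real (k - 1) - real (i - 1) * real m"
proof -
  have "peak i = real (k - 1 - (i - 1) * m)"
    using assms by (simp add: peak_def)
  also have "\<dots> = real (k - 1) - real ((i - 1) * m)"
    using index_offset_le[OF assms] by (rule of_nat_diff)
  finally show ?thesis by simp
qed

lemma sum_eq_of_separated_avoiding:
  fixes z :: "nat \<Rightarrow> int"
  assumes range: "\<And>i. i \<in> {1..n} \<Longrightarrow> 0 \<le> z i" "\<And>i. i \<in> {1..n} \<Longrightarrow> z i \<le> int (k - 1)"
    and sep: "\<And>i j. i \<in> {1..n} \<Longrightarrow> j \<in> {1..n} \<Longrightarrow> i \<noteq> j \<Longrightarrow> int m \<le> \<bar>z i - z j\<bar>"
    and avoid: "\<And>u. u < sum_exp \<Longrightarrow> (\<Sum>i\<in>{1..n}. z i) \<noteq> min_sum + int u"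
  shows "(\<Sum>i\<in>{1..n}. z i) = min_sum + int sum_exp"
proof -
  let ?I = "{1..n}"
  have card_I: "card ?I = n"
    by simp
  have "(\<Sum>r<card ?I. 0 + int r * int m) \<le> (\<Sum>i\<in>?I. z i)"
    by (rule sum_ge_of_separated) (simp_all add: sep range(1))
  then have lower: "min_sum \<le> (\<Sum>i\<in>?I. z i)"
    by (simp add: min_sum_def)
  have "(\<Sum>i\<in>?I. z i) \<le> (\<Sum>r<card ?I. int (k - 1) - int r * int m)"
  proof (rule sum_le_of_separated)
    show "z i \<le> int (k - 1)" if "i \<in> ?I" for i
      using range(2)[OF that] .
  qed (simp_all add: sep)
  then have upper: "(\<Sum>i\<in>?I. z i) \<le> min_sum + int sum_exp"
    unfolding card_I using sum_peak_coordinates by (rule ord_le_eq_trans)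
  show ?thesis
  proof (rule ccontr)
    assume "(\<Sum>i\<in>?I. z i) \<noteq> min_sum + int sum_exp"
    then have "nat ((\<Sum>i\<in>?I. z i) - min_sum) < sum_exp"
      using lower upper by linarith
    then show False
      using avoid[of "nat ((\<Sum>i\<in>?I. z i) - min_sum)"] lower by simp
  qed
qed

lemma staircase_of_gaps_avoiding:
  fixes z :: "nat \<Rightarrow> int"
  assumes range: "\<And>i. i \<in> {1..n} \<Longrightarrow> 0 \<le> z i" "\<And>i. i \<in> {1..n} \<Longrightarrow> z i \<le> int (k - 1)"
    and gap: "\<And>i j. i \<in> {1..n} \<Longrightarrow> j \<in> {1..n} \<Longrightarrow> i < j \<Longrightarrow> z i + int m + 1 \<le> z j \<or> z j + int m \<le> z i"
    and avoid: "\<And>u. u < sum_exp \<Longrightarrow> (\<Sum>i\<in>{1..n}. z i) \<noteq> min_sum + int u"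
    and i: "i \<in> {1..n}"
  shows "z i = int (k - 1) - int (i - 1) * int m"
proof -
  let ?I = "{1..n}"
  have sep: "int m \<le> \<bar>z i - z j\<bar>" if "i \<in> ?I" "j \<in> ?I" "i \<noteq> j" for i j
    using gap[of i j] gap[of j i] that by (cases "i < j") auto
  have "(\<Sum>i\<in>?I. z i) = min_sum + int sum_exp"
    using range sep avoid by (rule sum_eq_of_separated_avoiding)
  then have sum_eq: "(\<Sum>i\<in>?I. z i) = (\<Sum>r<card ?I. int (k - 1) - int r * int m)"
    unfolding card_atLeastAtMost diff_Suc_1 using sum_peak_coordinates by (rule trans[OF _ sym])
  have "\<forall>i\<in>?I. z i = int (k - 1) - int (card {j\<in>?I. j < i}) * int m"
  proof (rule staircase_of_separated_sum_eq[OF _ _ gap])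
    show "1 \<le> int m" using m_pos by simp
  qed (use range(2) sum_eq in auto)
  moreover have "{j\<in>?I. j < i} = {1..<i}"
    using i by auto
  ultimately show ?thesis
    using i by simp
qed

lemma mpoly_eval_shifted_even_poly_nonzero:
  fixes a :: "nat \<Rightarrow> real"
  assumes "mpoly_eval a shifted_even_poly \<noteq> 0"
  shows "\<And>u. u < sum_exp \<Longrightarrow> (\<Sum>i\<in>{1..n}. a i) \<noteq> of_int (min_sum + int u)"
    and "\<And>i j t. (i, j) \<in> index_pairs n \<Longrightarrow> t < 2 * m \<Longrightarrow> a j - a i \<noteq> of_int (int t - int m + 1)"
proof -
  from assms have sum_factor: "(\<Prod>u<sum_exp. (\<Sum>i\<in>{1..n}. a i) - of_int (min_sum + int u)) \<noteq> 0"
    and pair_factor: "(\<Prod>(i, j)\<in>index_pairs n. \<Prod>t<2 * m. a j - a i - of_int (int t - int m + 1)) \<noteq> 0"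
    by (auto simp: mpoly_eval_shifted_even_poly)
  show "(\<Sum>i\<in>{1..n}. a i) \<noteq> of_int (min_sum + int u)" if "u < sum_exp" for u
    using sum_factor that by (auto simp: prod_zero_iff)
  show "a j - a i \<noteq> of_int (int t - int m + 1)" if "(i, j) \<in> index_pairs n" "t < 2 * m" for i j t
  proof
    assume "a j - a i = of_int (int t - int m + 1)"
    then have "(\<Prod>t<2 * m. a j - a i - of_int (int t - int m + 1)) = 0"
      using that(2) by (intro prod_zero) auto
    then show False
      using pair_factor that(1) by (simp add: prod_zero_iff case_prod_beta) (metis fst_conv snd_conv)
  qed
qed

lemma nonzero_on_grid_imp_peak:
  assumes a: "a \<in> PiE {1..n} (\<lambda>_. grid_points (k - 1))" and nz: "mpoly_eval a shifted_even_poly \<noteq> 0"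
  shows "a = peak"
proof
  let ?I = "{1..n}"
  define z where "z i = \<lfloor>a i\<rfloor>" for i
  have az: "a i = of_int (z i)" "0 \<le> z i" "z i \<le> int (k - 1)" if "i \<in> ?I" for i
  proof -
    from a that have "a i \<in> grid_points (k - 1)" by auto
    then obtain c where "a i = real c" "c \<le> k - 1" by (auto simp: grid_points_def)
    then show "a i = of_int (z i)" "0 \<le> z i" "z i \<le> int (k - 1)" by (simp_all add: z_def)
  qed
  have gap: "z i + int m + 1 \<le> z j \<or> z j + int m \<le> z i" if "i \<in> ?I" "j \<in> ?I" "i < j" for i j
  proof (rule ccontr)
    assume "\<not> ?thesis"
    then have "z j - z i = int (nat (z j - z i + int m - 1)) - int m + 1" "nat (z j - z i + int m - 1) < 2 * m"
      by auto
    then show False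
      using mpoly_eval_shifted_even_poly_nonzero(2)[OF nz, of i j "nat (z j - z i + int m - 1)"] that az
      by (auto simp: index_pairs_def)
  qed
  have "(\<Sum>i\<in>?I. a i) = of_int (\<Sum>i\<in>?I. z i)"
    unfolding of_int_sum by (rule sum.cong) (simp_all add: az(1))
  then have avoid: "(\<Sum>i\<in>?I. z i) \<noteq> min_sum + int u" if "u < sum_exp" for u
    using mpoly_eval_shifted_even_poly_nonzero(1)[OF nz that] by (simp only: of_int_eq_iff not_False_eq_True)
  fix i
  show "a i = peak i"
  proof (cases "i \<in> ?I")
    case True
    have "z i = int (k - 1) - int (i - 1) * int m"
      by (rule staircase_of_gaps_avoiding[OF az(2) az(3) gap avoid True])
    then have "a i = of_int (int (k - 1) - int (i - 1) * int m)"
      using az(1)[OF True] by (simp only:)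
    also have "\<dots> = peak i"
      unfolding peak_eq[OF True] by (simp only: of_int_diff of_int_mult of_int_of_nat_eq)
    finally show ?thesis .
  next
    case False
    have "peak i = undefined"
      unfolding peak_def restrict_apply by (rule if_not_P[OF False])
    moreover have "a i = undefined"
      using a False by (rule PiE_arb)
    ultimately show ?thesis by simp
  qed
qed

lemma peak_in_grid: "peak \<in> PiE {1..n} (\<lambda>_. grid_points (k - 1))"
  by (auto simp: peak_def grid_points_def)

lemma coeff_even_poly_eq_peak:
  "real_of_int (Poly_Mapping.lookup even_poly (monomial_exps n (\<lambda>_. k - 1)))
     = mpoly_eval peak shifted_even_poly / (\<Prod>i\<in>{1..n}. lagrange_denom (grid_points (k - 1)) (peak i))"
proof -
  let ?I = "{1..n}"
  let ?E = "monomial_exps n (\<lambda>_. k - 1)"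
  let ?h = "\<lambda>a. mpoly_eval a shifted_even_poly / (\<Prod>i\<in>?I. lagrange_denom (grid_points (k - 1)) (a i))"
  have "Poly_Mapping.lookup even_poly ?E = Poly_Mapping.lookup shifted_even_poly ?E"
    by (rule same_top_form_coeff[OF same_top_form_shifted_even_poly, symmetric])
      (simp add: monom_degree_monomial_exps)
  then have "real_of_int (Poly_Mapping.lookup even_poly ?E) = (\<Sum>a\<in>PiE ?I (\<lambda>_. grid_points (k - 1)). ?h a)"
    using coeff_eq_grid_sum[of ?I "\<lambda>_. grid_points (k - 1)" shifted_even_poly ?E]
      vars_in_shifted_even_poly same_top_form_shifted_even_poly keys_monomial_exps[of n]
    by (simp add: same_top_form_def lookup_monomial_exps)
  also have "\<dots> = (\<Sum>a\<in>{peak}. ?h a)"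
    by (rule sum.mono_neutral_right) (use peak_in_grid nonzero_on_grid_imp_peak in \<open>auto simp: finite_PiE\<close>)
  finally show ?thesis by simp
qed

lemma sum_peak: "(\<Sum>i\<in>{1..n}. peak i) = of_int (min_sum + int sum_exp)"
proof -
  have "(\<Sum>i\<in>{1..n}. peak i) = (\<Sum>r<n. real_of_int (int (k - 1) - int r * int m))"
    by (rule sum.reindex_bij_witness[where i=Suc and j="\<lambda>i. i - 1"]) (auto simp: peak_eq)
  then show ?thesis
    by (simp only: of_int_sum[symmetric] sum_peak_coordinates)
qed

lemma prod_sum_peak_shifts:
  "(\<Prod>u<sum_exp. (\<Sum>i\<in>{1..n}. peak i) - of_int (min_sum + int u)) = fact sum_exp"
proof -
  have "(\<Prod>u<sum_exp. (\<Sum>i\<in>{1..n}. peak i) - of_int (min_sum + int u)) = (\<Prod>u<sum_exp. real (sum_exp - u))"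
    unfolding sum_peak by (intro prod.cong refl) (simp add: of_nat_diff)
  also have "\<dots> = fact sum_exp"
    by (simp add: fact_prod_rev atLeast0LessThan)
  finally show ?thesis .
qed

lemma prod_pair_peak_shifts:
  assumes "(i, j) \<in> index_pairs n"
  shows "(\<Prod>t<2 * m. peak j - peak i - of_int (int t - int m + 1))
    = fact ((j - i + 1) * m) / fact ((j - i - 1) * m)"
proof -
  have i: "i \<in> {1..n}" and j: "j \<in> {1..n}" and lt: "i < j"
    using assms by (auto simp: index_pairs_def)
  define d where "d = j - i - 1"
  have "j - 1 = (i - 1) + d + 1" using lt i by (auto simp: d_def)
  then have "real (j - 1) = real (i - 1) + real d + 1" by (metis of_nat_add of_nat_1)
  then have "peak j - peak i - of_int (int t - int m + 1) = (-1) * real (d * m + 1 + t)" for t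
    by (simp add: peak_eq[OF i] peak_eq[OF j] algebra_simps)
  then have "(\<Prod>t<2 * m. peak j - peak i - of_int (int t - int m + 1))
      = (-1) ^ (2 * m) * (\<Prod>t<2 * m. real (d * m + 1 + t))"
    by (simp only: prod.distrib prod_constant card_lessThan)
  also have "\<dots> = (-1) ^ (2 * m) * (fact (d * m + 2 * m) / fact (d * m))"
    by (simp only: prod_lessThan_shift_eq_fact_div)
  also have "\<dots> = fact (d * m + 2 * m) / fact (d * m)"
    by (simp add: power_mult)
  also have "d * m + 2 * m = (j - i + 1) * m"
  proof -
    have "d + 2 = j - i + 1" using lt by (simp add: d_def)
    then show ?thesis by (metis add_mult_distrib)
  qed
  finally show ?thesis by (simp add: d_def)
qed

lemma mpoly_eval_shifted_even_poly_peak: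
  "mpoly_eval peak shifted_even_poly
    = fact sum_exp * (\<Prod>(i, j)\<in>index_pairs n. fact ((j - i + 1) * m) / fact ((j - i - 1) * m))"
proof -
  have "(\<Prod>(i, j)\<in>index_pairs n. \<Prod>t<2 * m. peak j - peak i - of_int (int t - int m + 1))
      = (\<Prod>(i, j)\<in>index_pairs n. fact ((j - i + 1) * m) / fact ((j - i - 1) * m))"
  proof (rule prod.cong[OF refl])
    fix x assume "x \<in> index_pairs n"
    then obtain i j where x: "x = (i, j)" "(i, j) \<in> index_pairs n" by (cases x) auto
    show "(case x of (i, j) \<Rightarrow> \<Prod>t<2 * m. peak j - peak i - of_int (int t - int m + 1))
        = (case x of (i, j) \<Rightarrow> fact ((j - i + 1) * m) / fact ((j - i - 1) * m))"
      unfolding x(1) prod.case by (rule prod_pair_peak_shifts[OF x(2)])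
  qed
  then show ?thesis
    unfolding mpoly_eval_shifted_even_poly prod_sum_peak_shifts by simp
qed

lemma prod_index_pairs_fact_ratio:
  "(\<Prod>(i, j)\<in>index_pairs n. fact ((j - i + 1) * m) / fact ((j - i - 1) * m))
     = (\<Prod>j<n. fact ((j + 1) * m)) * (\<Prod>j<n. fact (j * m)) / (fact m ^ n :: real)"
  using prod_index_pairs_telescope[of "\<lambda>d. fact (d * m) :: real" n]
  by (simp add: prod_dividef prod.distrib)

lemma prod_lagrange_denom_peak:
  "(\<Prod>i\<in>{1..n}. lagrange_denom (grid_points (k - 1)) (peak i))
     = (-1) ^ (m * (n choose 2)) * (\<Prod>r<n. fact (k - 1 - r * m)) * (\<Prod>r<n. fact (r * m))"
proof -
  have "(\<Prod>i\<in>{1..n}. lagrange_denom (grid_points (k - 1)) (peak i))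
      = (\<Prod>i\<in>{1..n}. (-1) ^ ((i - 1) * m) * fact (k - 1 - (i - 1) * m) * fact ((i - 1) * m))"
  proof (rule prod.cong[OF refl])
    fix i assume i: "i \<in> {1..n}"
    have "k - 1 - (k - 1 - (i - 1) * m) = (i - 1) * m"
      using index_offset_le[OF i] by simp
    then show "lagrange_denom (grid_points (k - 1)) (peak i)
        = (-1) ^ ((i - 1) * m) * fact (k - 1 - (i - 1) * m) * fact ((i - 1) * m)"
      using i lagrange_denom_of_nat_atLeastAtMost[of "k - 1 - (i - 1) * m" "k - 1", where 'a=real]
      by (simp add: grid_points_def peak_def)
  qed
  also have "\<dots> = (\<Prod>r<n. (-1) ^ (r * m) * fact (k - 1 - r * m) * fact (r * m))"
    by (rule prod.reindex_bij_witness[where i=Suc and j="\<lambda>i. i - 1"]) auto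
  also have "\<dots> = (-1) ^ (\<Sum>r<n. r * m) * (\<Prod>r<n. fact (k - 1 - r * m)) * (\<Prod>r<n. fact (r * m))"
    by (simp add: prod.distrib power_sum)
  also have "(\<Sum>r<n. r * m) = m * (n choose 2)"
    by (simp add: sum_distrib_right[symmetric] sum_lessThan_eq_choose_2)
  finally show ?thesis .
qed

theorem coeff_odd_poly_staircase:
  "real_of_int (coeff_of odd_poly (monomial_exps n staircase_exp))
   = (-1) ^ ((m - 1) * (n choose 2))
     * ((\<Prod>j\<in>{1..n}. fact (j * m)) / (fact m ^ n * fact n))
     * (fact ((k - 1 - m * (n - 1)) * n) / (\<Prod>r\<in>{0..n-1}. fact (k - 1 - r * m)))"
proof -
  let ?C = "real_of_int (coeff_of odd_poly (monomial_exps n staircase_exp))"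
  let ?c = "n choose 2"
  define P1 where "P1 = (\<Prod>j<n. fact ((j + 1) * m) :: real)"
  define P0 where "P0 = (\<Prod>j<n. fact (j * m) :: real)"
  define F where "F = (\<Prod>r<n. fact (k - 1 - r * m) :: real)"
  have "fact n * (-1) ^ ?c * ?C = fact sum_exp * (P1 * P0 / fact m ^ n) / ((-1) ^ (m * ?c) * F * P0)"
    using coeff_even_poly_eq_coeff_odd_poly coeff_even_poly_eq_peak
    unfolding mpoly_eval_shifted_even_poly_peak prod_index_pairs_fact_ratio prod_lagrange_denom_peak
    by (simp add: coeff_of_def P1_def P0_def F_def)
  moreover have nz: "P0 \<noteq> 0" "F \<noteq> 0" by (auto simp: P0_def F_def)
  ultimately have "?C = fact sum_exp * P1 / (fact m ^ n * (-1) ^ (m * ?c) * F * fact n * (-1) ^ ?c)"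
    by (simp add: field_simps)
  also have "\<dots> = ((-1) ^ ((m - 1) * ?c) * ((-1) ^ (m * ?c) * (-1) ^ ?c))
      * (fact sum_exp * P1 / (fact m ^ n * (-1) ^ (m * ?c) * F * fact n * (-1) ^ ?c))"
    unfolding neg_one_power_pred_mult_cancel[OF m_pos] by (simp only: mult_1)
  also have "\<dots> = (-1) ^ ((m - 1) * ?c) * (P1 / (fact m ^ n * fact n)) * (fact sum_exp / F)"
    using nz by (simp add: field_simps)
  finally have C: "?C = (-1) ^ ((m - 1) * ?c) * (P1 / (fact m ^ n * fact n)) * (fact sum_exp / F)" .
  moreover have "(\<Prod>j\<in>{1..n}. fact (j * m)) = P1"
    unfolding P1_def by (rule prod.reindex_bij_witness[where i="\<lambda>j. j + 1" and j="\<lambda>i. i - 1"]) auto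
  moreover have "(\<Prod>r\<in>{0..n-1}. fact (k - 1 - r * m)) = F"
    using n_pos by (simp add: F_def atLeast0AtMost lessThan_Suc_atMost[symmetric])
  ultimately show ?thesis using C by (simp add: sum_exp_eq)
qed

end

lemma coeff_vandermonde_power:
  fixes m n :: nat
  assumes "0 < m" "0 < n"
  shows "real_of_int (coeff_of (vandermonde_power n (2 * m - 1)) (monomial_exps n (\<lambda>i. (m - 1) * (n - 1) + i - 1)))
    = (-1) ^ ((m - 1) * (n choose 2)) * (fact (m * n) / (fact m ^ n * fact n))"
proof -
  let ?k = "m * (n - 1) + 1"
  interpret coeff_parameters n m ?k
    using assms by unfold_locales auto
  have "sum_exp = 0"
    using sum_exp_eq by simp
  then have odd_poly_eq: "odd_poly = vandermonde_power n (2 * m - 1)"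
    unfolding odd_poly_def by simp
  have "n - 1 \<le> m * (n - 1)"
    using assms by simp
  then have "?k - n = (m - 1) * (n - 1)"
    using assms by (simp add: diff_mult_distrib)
  then have staircase_exp_eq: "staircase_exp = (\<lambda>i. (m - 1) * (n - 1) + i - 1)"
    unfolding fun_eq_iff staircase_exp_def by simp
  have sum_exp_zero: "(?k - 1 - m * (n - 1)) * n = 0"
    by simp
  have denom_eq: "(\<Prod>r\<in>{0..n-1}. fact (?k - 1 - r * m)) = (\<Prod>j\<in>{0..n-1}. fact (j * m) :: real)"
  proof (rule prod.reindex_bij_witness[where i="\<lambda>j. n - 1 - j" and j="\<lambda>r. n - 1 - r"])
    fix r
    have "?k - 1 = m * (n - 1)" "(n - 1 - r) * m = (n - 1) * m - r * m"
      by (simp_all add: diff_mult_distrib)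
    then have "?k - 1 - r * m = (n - 1 - r) * m"
      by (simp only: mult.commute)
    then show "fact ((n - 1 - r) * m) = (fact (?k - 1 - r * m) :: real)"
      by simp
  qed auto
  have numer_eq: "(\<Prod>j\<in>{1..n}. fact (j * m) :: real) = fact (m * n) * (\<Prod>j\<in>{1..n-1}. fact (j * m))"
  proof -
    have "{1..n} = insert n {1..n-1}" "n \<notin> {1..n-1}" using assms by auto
    then show ?thesis by (simp add: mult.commute)
  qed
  have "(\<Prod>j\<in>{0..n-1}. fact (j * m) :: real) = (\<Prod>j\<in>{1..n-1}. fact (j * m))"
  proof -
    have "{0..n-1} = insert 0 {1..n-1}" by auto
    then show ?thesis by simp
  qed
  moreover have "(\<Prod>j\<in>{1..n-1}. fact (j * m) :: real) \<noteq> 0"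
    by simp
  ultimately show ?thesis
    using coeff_odd_poly_staircase
    unfolding odd_poly_eq staircase_exp_eq sum_exp_zero denom_eq numer_eq
    by (simp add: field_simps)
qed

theorem corollary2p2:
  fixes k m n :: nat
  assumes "k > 0" "m > 0" "n > 0" "k > m * (n - 1)"
  shows "real_of_int (coeff_of
            ((\<Sum>i\<in>{1..n}. var i) ^ ((k - 1) * n - m * n * (n - 1)) *
             (\<Prod>(i, j)\<in>{(i, j). 1 \<le> i \<and> i < j \<and> j \<le> n}. (var j - var i) ^ (2 * m - 1)))
            (monomial_exps n (\<lambda>i. k - n + i - 1)))
         = (-1) ^ ((m - 1) * (n choose 2))
           * ((\<Prod>j\<in>{1..n}. fact (j * m)) / (fact m ^ n * fact n))
           * (fact ((k - 1 - m * (n - 1)) * n) / (\<Prod>r\<in>{0..n-1}. fact (k - 1 - r * m)))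
       \<and> real_of_int (coeff_of
            (\<Prod>(i, j)\<in>{(i, j). 1 \<le> i \<and> i < j \<and> j \<le> n}. (var j - var i) ^ (2 * m - 1))
            (monomial_exps n (\<lambda>i. (m - 1) * (n - 1) + i - 1)))
         = (-1) ^ ((m - 1) * (n choose 2)) * (fact (m * n) / (fact m ^ n * fact n))"
proof -
  interpret coeff_parameters n m k
    using assms by unfold_locales auto
  have "(\<Sum>i\<in>{1..n}. var i) ^ ((k - 1) * n - m * n * (n - 1)) *
      (\<Prod>(i, j)\<in>{(i, j). 1 \<le> i \<and> i < j \<and> j \<le> n}. (var j - var i) ^ (2 * m - 1)) = odd_poly"
    by (simp only: odd_poly_def sum_exp_def var_sum_def vandermonde_power_def index_pairs_def)
  moreover have "(\<lambda>i. k - n + i - 1) = staircase_exp"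
    by (rule ext) (simp only: staircase_exp_def)
  moreover have "(\<Prod>(i, j)\<in>{(i, j). 1 \<le> i \<and> i < j \<and> j \<le> n}. (var j - var i) ^ (2 * m - 1))
      = vandermonde_power n (2 * m - 1)"
    by (simp only: vandermonde_power_def index_pairs_def)
  ultimately show ?thesis
    using coeff_odd_poly_staircase coeff_vandermonde_power[OF \<open>m > 0\<close> \<open>n > 0\<close>] by (simp only:)
qed

end
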